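(* Let $G$ be a finite group and $p$ a prime such that the Sylow $p$-subgroups of $G$ are cyclic of order $p^r$ with $r\ge1$. For an integer $k$, let $\mathcal P(G,k)$ denote the number of elements of $G$ whose order is divisible by $p^k$. Then, for every $1\le k\le r$, $$\mathcal P(G,k)=\frac{p^{r-k+1}-1}{p^{r-k+1}}\cdot\frac{|G|\,|Z_G(Q)|}{|N_G(Q)|},$$ where $Q$ is any non-trivial $p$-subgroup of $G$ (the ratio $|Z_G(Q)|/|N_G(Q)|$ does not depend on this choice). Furthermore, $\mathcal P(G,0)=|G|$, and $\mathcal P(G,k)=0$ for $k>r$.
   Context: $Z_G(Q)$ denotes the centraliser and $N_G(Q)$ the normaliser of $Q$ in $G$. *)

theory Defs
  imports "HOL-Algebra.Algebra"
begin

definition centralizer_set :: "('a, 'b) monoid_scheme \<Rightarrow> 'a set \<Rightarrow> 'a set" where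
  "centralizer_set G Q = {g \<in> carrier G. \<forall>q\<in>Q. g \<otimes>\<^bsub>G\<^esub> q = q \<otimes>\<^bsub>G\<^esub> g}"

definition sylow_subgroup :: "('a, 'b) monoid_scheme \<Rightarrow> nat \<Rightarrow> 'a set \<Rightarrow> bool" where
  "sylow_subgroup G p P \<longleftrightarrow> subgroup P G \<and> card P = p ^ multiplicity p (order G)"

definition p_subgroup :: "('a, 'b) monoid_scheme \<Rightarrow> nat \<Rightarrow> 'a set \<Rightarrow> bool" where
  "p_subgroup G p Q \<longleftrightarrow> subgroup Q G \<and> (\<exists>n. card Q = p ^ n)"

definition elems_order_div :: "('a, 'b) monoid_scheme \<Rightarrow> nat \<Rightarrow> nat \<Rightarrow> nat" where
  "elems_order_div G p k = card {x \<in> carrier G. p ^ k dvd group.ord G x}"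

end

theory Submission
  imports Defs
begin

text \<open>Write every element as \<open>x = x\<^sub>p x\<^sub>p\<^sub>'\<close> with commuting \<open>p\<close>- and \<open>p'\<close>-parts; then \<open>p ^ k\<close>
  divides the order of \<open>x\<close> iff \<open>x\<^sub>p ^ p ^ (k - 1) \<noteq> 1\<close>. As the Sylow \<open>p\<close>-subgroups are cyclic, the
  subgroups of order \<open>p ^ j\<close> form one conjugacy class, and for \<open>j \<le> k\<close> an element whose order is
  divisible by \<open>p ^ k\<close> centralizes exactly one of them, the subgroup of order \<open>p ^ j\<close> of the cyclic
  group generated by \<open>x\<^sub>p\<close>. Hence, for \<open>|Q| = p ^ j\<close>, the number of such elements of \<open>G\<close> is
  \<open>|G : N\<^sub>G(Q)|\<close> times the number of such elements of \<open>H = Z\<^sub>G(Q)\<close>.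

  In \<open>H\<close> every element normalizing a Sylow subgroup \<open>P\<close> centralizes it: its \<open>p'\<close>-part centralizes
  the elements of order \<open>p\<close> of \<open>P\<close>, which lie in \<open>Q\<close>, and therefore all of the cyclic group \<open>P\<close>.
  Burnside's counting argument then shows that every \<open>p\<close>-element \<open>y\<close> of \<open>H\<close> is the \<open>p\<close>-part of
  exactly \<open>|Z\<^sub>H(y)| / p ^ r\<close> elements of \<open>H\<close>, and summing over conjugacy classes of \<open>p\<close>-elements
  gives the fraction \<open>(p ^ r - p ^ (k - 1)) / p ^ r\<close> of \<open>H\<close>. The case \<open>k = r\<close> shows that
  \<open>|Z\<^sub>G(Q)| / |N\<^sub>G(Q)|\<close> does not depend on \<open>Q\<close>, so \<open>Q\<close> may be taken of order \<open>p\<close>, which is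
  admissible for every \<open>k\<close>.\<close>

section \<open>Conjugation, centralizers and normalizers\<close>

definition conj_set :: "('a, 'b) monoid_scheme \<Rightarrow> 'a \<Rightarrow> 'a set \<Rightarrow> 'a set" where
  "conj_set G g A = (\<lambda>x. g \<otimes>\<^bsub>G\<^esub> x \<otimes>\<^bsub>G\<^esub> inv\<^bsub>G\<^esub> g) ` A"

definition conjugates :: "('a, 'b) monoid_scheme \<Rightarrow> 'a set \<Rightarrow> 'a set set" where
  "conjugates G A = (\<lambda>g. conj_set G g A) ` carrier G"

context group begin

lemma inv_mult_cancel_left [simp]: "g \<in> carrier G \<Longrightarrow> x \<in> carrier G \<Longrightarrow> inv g \<otimes> (g \<otimes> x) = x"
  by (simp add: m_assoc[symmetric])

lemma mult_inv_cancel_left [simp]: "g \<in> carrier G \<Longrightarrow> x \<in> carrier G \<Longrightarrow> g \<otimes> (inv g \<otimes> x) = x"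
  by (simp add: m_assoc[symmetric])

lemma conj_eq_one_iff:
  "g \<in> carrier G \<Longrightarrow> x \<in> carrier G \<Longrightarrow> g \<otimes> x \<otimes> inv g = \<one> \<longleftrightarrow> x = \<one>"
proof
  assume g: "g \<in> carrier G" and x: "x \<in> carrier G" and e: "g \<otimes> x \<otimes> inv g = \<one>"
  have "x = inv g \<otimes> (g \<otimes> x \<otimes> inv g) \<otimes> g" using g x by (simp add: m_assoc)
  then show "x = \<one>" using e g by simp
qed simp

lemma nat_pow_conj: "g \<in> carrier G \<Longrightarrow> x \<in> carrier G \<Longrightarrow>
    (g \<otimes> x \<otimes> inv g) [^] (n::nat) = g \<otimes> (x [^] n) \<otimes> inv g"
  by (induction n) (simp_all add: m_assoc)

lemma nat_pow_conj_iterate: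
  assumes u: "u \<in> carrier G" and x: "x \<in> carrier G" and f: "f \<in> carrier G"
    and conj: "u \<otimes> x \<otimes> inv u = f \<otimes> x" and comm: "u \<otimes> f = f \<otimes> u"
  shows "u [^] (i::nat) \<otimes> x \<otimes> inv (u [^] i) = f [^] i \<otimes> x"
proof (induction i)
  case 0
  then show ?case using x by simp
next
  case (Suc i)
  have comm_pow: "u \<otimes> f [^] i = f [^] i \<otimes> u"
    using group_commutes_pow[OF comm[symmetric] f u] by simp
  have "u [^] Suc i = u \<otimes> u [^] i" using u nat_pow_Suc2 by blast
  then have "u [^] Suc i \<otimes> x \<otimes> inv (u [^] Suc i) = u \<otimes> (u [^] i \<otimes> x \<otimes> inv (u [^] i)) \<otimes> inv u"
    using u x by (simp add: m_assoc inv_mult_group)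
  also have "\<dots> = f [^] i \<otimes> (u \<otimes> x \<otimes> inv u)"
    using Suc.IH comm_pow u x f by (simp add: m_assoc[symmetric])
  also have "\<dots> = f [^] Suc i \<otimes> x"
    using conj f x by (simp add: m_assoc)
  finally show ?case .
qed

lemma subgroup_nat_pow_closed: "subgroup H G \<Longrightarrow> x \<in> H \<Longrightarrow> x [^] (n::nat) \<in> H"
  by (induction n) (auto simp: subgroup.one_closed subgroup.m_closed)

lemma nat_pow_card_subgroup: assumes "subgroup H G" "x \<in> H" shows "x [^] card H = \<one>"
proof -
  interpret H: group "G\<lparr>carrier := H\<rparr>" using subgroup_imp_group[OF assms(1)] .
  have "x [^]\<^bsub>G\<lparr>carrier := H\<rparr>\<^esub> order (G\<lparr>carrier := H\<rparr>) = \<one>\<^bsub>G\<lparr>carrier := H\<rparr>\<^esub>"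
    using H.pow_order_eq_1 assms(2) by simp
  then show ?thesis using nat_pow_consistent[of x "card H" H] by (simp add: order_def)
qed

lemma conj_set_subset: "g \<in> carrier G \<Longrightarrow> A \<subseteq> carrier G \<Longrightarrow> conj_set G g A \<subseteq> carrier G"
  unfolding conj_set_def by auto

lemma conj_set_memI: "x \<in> A \<Longrightarrow> g \<otimes> x \<otimes> inv g \<in> conj_set G g A"
  unfolding conj_set_def by auto

lemma conj_set_mono: "A \<subseteq> B \<Longrightarrow> conj_set G g A \<subseteq> conj_set G g B"
  unfolding conj_set_def by auto

lemma conj_set_mult: "g \<in> carrier G \<Longrightarrow> h \<in> carrier G \<Longrightarrow> A \<subseteq> carrier G \<Longrightarrow>
    conj_set G (g \<otimes> h) A = conj_set G g (conj_set G h A)"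
  unfolding conj_set_def image_image
  by (intro image_cong refl) (auto simp: inv_mult_group m_assoc subsetD)

lemma conj_set_one: "A \<subseteq> carrier G \<Longrightarrow> conj_set G \<one> A = A"
  unfolding conj_set_def by (auto simp: subsetD)

lemma conj_set_inv_conj_set:
  "g \<in> carrier G \<Longrightarrow> A \<subseteq> carrier G \<Longrightarrow> conj_set G (inv g) (conj_set G g A) = A"
  by (simp add: conj_set_mult[symmetric] conj_set_one)

lemma conj_set_conj_set_inv:
  "g \<in> carrier G \<Longrightarrow> A \<subseteq> carrier G \<Longrightarrow> conj_set G g (conj_set G (inv g) A) = A"
  by (simp add: conj_set_mult[symmetric] conj_set_one)

lemma mem_conj_set_iff:
  assumes g: "g \<in> carrier G" and A: "A \<subseteq> carrier G" and y: "y \<in> carrier G"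
  shows "y \<in> conj_set G g A \<longleftrightarrow> inv g \<otimes> y \<otimes> g \<in> A"
proof
  show "y \<in> conj_set G g A \<Longrightarrow> inv g \<otimes> y \<otimes> g \<in> A"
    using g A unfolding conj_set_def by (auto simp: m_assoc subsetD)
  assume "inv g \<otimes> y \<otimes> g \<in> A"
  then have "g \<otimes> (inv g \<otimes> y \<otimes> g) \<otimes> inv g \<in> conj_set G g A" by (rule conj_set_memI)
  moreover have "g \<otimes> (inv g \<otimes> y \<otimes> g) \<otimes> inv g = y"
    using g y by (simp add: m_assoc[symmetric]) (simp add: m_assoc)
  ultimately show "y \<in> conj_set G g A" by simp
qed

lemma card_conj_set: "g \<in> carrier G \<Longrightarrow> A \<subseteq> carrier G \<Longrightarrow> card (conj_set G g A) = card A"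
  unfolding conj_set_def by (rule card_image) (auto simp: inj_on_def subsetD)

lemma conj_set_subset_subgroup:
  "subgroup H G \<Longrightarrow> h \<in> H \<Longrightarrow> A \<subseteq> H \<Longrightarrow> conj_set G h A \<subseteq> H"
  unfolding conj_set_def by (auto simp: subgroup.m_closed subgroup.m_inv_closed subsetD)

lemma subgroup_conj_set: assumes "subgroup A G" "g \<in> carrier G" shows "subgroup (conj_set G g A) G"
proof -
  interpret A: subgroup A G by fact
  show ?thesis
  proof
    show "conj_set G g A \<subseteq> carrier G" using conj_set_subset assms A.subset by blast
    show "\<one> \<in> conj_set G g A" using conj_set_memI[OF A.one_closed, of g] assms by simp
    fix x y assume "x \<in> conj_set G g A" and "y \<in> conj_set G g A"
    then obtain a b where a: "a \<in> A" "x = g \<otimes> a \<otimes> inv g" and b: "b \<in> A" "y = g \<otimes> b \<otimes> inv g"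
      unfolding conj_set_def by auto
    have ac: "a \<in> carrier G" "b \<in> carrier G" using a b A.subset by auto
    have "x \<otimes> y = g \<otimes> (a \<otimes> b) \<otimes> inv g"
      using a b ac assms by (simp add: m_assoc)
    then show "x \<otimes> y \<in> conj_set G g A" using conj_set_memI[of "a \<otimes> b" A g] a b by simp
    have "inv x = g \<otimes> inv a \<otimes> inv g"
      using a ac assms by (simp add: inv_mult_group m_assoc)
    then show "inv x \<in> conj_set G g A" using conj_set_memI[of "inv a" A g] a by simp
  qed
qed

lemma conj_set_eq_cosets: "g <# A #> inv g = conj_set G g A"
  unfolding l_coset_def r_coset_def conj_set_def by auto

lemma normalizer_eq_conj_set:
  "A \<subseteq> carrier G \<Longrightarrow> normalizer G A = {g \<in> carrier G. conj_set G g A = A}"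
  unfolding normalizer_def stabilizer_def by (auto simp: conj_set_eq_cosets)

lemma card_conjugates_mult_card_normalizer:
  assumes "A \<subseteq> carrier G"
  shows "card (conjugates G A) * card (normalizer G A) = order G"
proof -
  interpret conjugation: group_action G "{H. H \<subseteq> carrier G}" "\<lambda>g. \<lambda>H\<in>{H. H \<subseteq> carrier G}. g <# H #> inv g"
    by (rule action_by_conjugation_on_power_set)
  have "orbit G (\<lambda>g. \<lambda>H\<in>{H. H \<subseteq> carrier G}. g <# H #> inv g) A = conjugates G A"
    unfolding orbit_def conjugates_def using assms by (auto simp: conj_set_eq_cosets)
  then show ?thesis
    using conjugation.orbit_stabilizer_theorem[of A] assms unfolding normalizer_def by simp
qed

lemma subgroup_centralizer_set:
  assumes "A \<subseteq> carrier G" shows "subgroup (centralizer_set G A) G"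
proof
  show "centralizer_set G A \<subseteq> carrier G" unfolding centralizer_set_def by auto
  show "\<one> \<in> centralizer_set G A" unfolding centralizer_set_def using assms by auto
  fix x y assume x: "x \<in> centralizer_set G A" and y: "y \<in> centralizer_set G A"
  then have xc: "x \<in> carrier G" and yc: "y \<in> carrier G" unfolding centralizer_set_def by auto
  show "x \<otimes> y \<in> centralizer_set G A" unfolding centralizer_set_def
  proof (intro CollectI conjI ballI)
    show "x \<otimes> y \<in> carrier G" using xc yc by simp
    fix q assume q: "q \<in> A"
    have qc: "q \<in> carrier G" using q assms by auto
    have "x \<otimes> y \<otimes> q = x \<otimes> (q \<otimes> y)" using y q xc yc qc unfolding centralizer_set_def by (simp add: m_assoc)
    also have "\<dots> = q \<otimes> x \<otimes> y" using x q xc yc qc unfolding centralizer_set_def by (simp add: m_assoc[symmetric])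
    finally show "x \<otimes> y \<otimes> q = q \<otimes> (x \<otimes> y)" using xc yc qc by (simp add: m_assoc)
  qed
  show "inv x \<in> centralizer_set G A" unfolding centralizer_set_def
  proof (intro CollectI conjI ballI)
    show "inv x \<in> carrier G" using xc by simp
    fix q assume q: "q \<in> A"
    have qc: "q \<in> carrier G" using q assms by auto
    have "x \<otimes> q = q \<otimes> x" using x q unfolding centralizer_set_def by auto
    then have "inv x \<otimes> q = inv x \<otimes> (q \<otimes> x) \<otimes> inv x" using xc qc by (simp add: m_assoc)
    also have "\<dots> = q \<otimes> inv x" using \<open>x \<otimes> q = q \<otimes> x\<close>[symmetric] xc qc by (simp add: m_assoc[symmetric])
    finally show "inv x \<otimes> q = q \<otimes> inv x" .
  qed
qed

lemma conj_set_centralizer_set: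
  assumes h: "h \<in> centralizer_set G A" and A: "A \<subseteq> carrier G" shows "conj_set G h A = A"
proof -
  have hc: "h \<in> carrier G" using h unfolding centralizer_set_def by auto
  have "(\<lambda>x. h \<otimes> x \<otimes> inv h) ` A = (\<lambda>x. x) ` A"
  proof (rule image_cong[OF refl])
    fix x assume x: "x \<in> A"
    have "h \<otimes> x = x \<otimes> h" using h x unfolding centralizer_set_def by auto
    then show "h \<otimes> x \<otimes> inv h = x" using hc x A by (simp add: m_assoc subsetD)
  qed
  then show ?thesis unfolding conj_set_def by simp
qed

lemma conj_set_centralizer_set_subset:
  assumes g: "g \<in> carrier G" and A: "A \<subseteq> carrier G"
  shows "conj_set G g (centralizer_set G A) \<subseteq> centralizer_set G (conj_set G g A)"
proof
  fix w assume "w \<in> conj_set G g (centralizer_set G A)"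
  then obtain c where c: "c \<in> centralizer_set G A" "w = g \<otimes> c \<otimes> inv g" unfolding conj_set_def by auto
  have cc: "c \<in> carrier G" using c unfolding centralizer_set_def by auto
  show "w \<in> centralizer_set G (conj_set G g A)" unfolding centralizer_set_def
  proof (intro CollectI conjI ballI)
    show "w \<in> carrier G" using c cc g by simp
    fix q assume "q \<in> conj_set G g A"
    then obtain a where a: "a \<in> A" "q = g \<otimes> a \<otimes> inv g" unfolding conj_set_def by auto
    have ac: "a \<in> carrier G" using a A by auto
    have ca: "c \<otimes> a = a \<otimes> c" using c a unfolding centralizer_set_def by auto
    have "w \<otimes> q = g \<otimes> (c \<otimes> a) \<otimes> inv g" using a c g cc ac by (simp add: m_assoc)
    also have "\<dots> = g \<otimes> (a \<otimes> c) \<otimes> inv g" using ca by simp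
    also have "\<dots> = q \<otimes> w" using a c g cc ac by (simp add: m_assoc)
    finally show "w \<otimes> q = q \<otimes> w" .
  qed
qed

lemma centralizer_set_conj_set:
  assumes g: "g \<in> carrier G" and A: "A \<subseteq> carrier G"
  shows "centralizer_set G (conj_set G g A) = conj_set G g (centralizer_set G A)"
proof
  show "conj_set G g (centralizer_set G A) \<subseteq> centralizer_set G (conj_set G g A)"
    using conj_set_centralizer_set_subset[OF g A] .
  have C: "centralizer_set G (conj_set G g A) \<subseteq> carrier G" unfolding centralizer_set_def by auto
  have "conj_set G (inv g) (centralizer_set G (conj_set G g A)) \<subseteq> centralizer_set G A"
    using conj_set_centralizer_set_subset[OF inv_closed[OF g] conj_set_subset[OF g A]]
      conj_set_inv_conj_set[OF g A] by simp
  then have "conj_set G g (conj_set G (inv g) (centralizer_set G (conj_set G g A)))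
      \<subseteq> conj_set G g (centralizer_set G A)"
    by (rule conj_set_mono)
  then show "centralizer_set G (conj_set G g A) \<subseteq> conj_set G g (centralizer_set G A)"
    using conj_set_conj_set_inv[OF g C] by simp
qed

lemma card_centralizer_set_conj_set:
  "g \<in> carrier G \<Longrightarrow> A \<subseteq> carrier G \<Longrightarrow>
    card (centralizer_set G (conj_set G g A)) = card (centralizer_set G A)"
  using centralizer_set_conj_set card_conj_set by (simp add: centralizer_set_def)

end

section \<open>Containment in conjugates of a subgroup of index prime to \<open>p\<close>\<close>

lemma (in group_action) p_group_action_fixed_point:
  assumes fin: "finite E" and p: "Factorial_Ring.prime p" and order_G: "order G = p ^ n"
    and coprime: "\<not> p dvd card E"
  shows "\<exists>x\<in>E. orbit G \<phi> x = {x}"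
proof (rule ccontr)
  assume no_fixed: "\<not> ?thesis"
  have orbit_dvd: "p dvd card Ob" if Ob: "Ob \<in> orbits G E \<phi>" for Ob
  proof -
    obtain x where x: "x \<in> E" "Ob = orbit G \<phi> x" using Ob unfolding orbits_def by auto
    have "card Ob dvd p ^ n" using orbit_stabilizer_theorem[OF x(1)] x(2) order_G by (metis dvd_triv_left)
    then obtain i where "card Ob = p ^ i" using divides_primepow_nat[OF p] by blast
    moreover have "card Ob \<noteq> 1" using no_fixed x orbit_refl[OF x(1)] by (metis card_1_singletonE singletonD)
    ultimately show ?thesis by (cases i) auto
  qed
  have "p dvd (\<Sum>Ob\<in>orbits G E \<phi>. \<Sum>x\<in>Ob. 1)"
    by (rule dvd_sum) (simp add: orbit_dvd)
  then show False using disjoint_sum[OF fin, of "\<lambda>_. 1::nat"] coprime by simp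
qed

context group begin

lemma rcosets_action:
  assumes S: "subgroup S G"
  shows "group_action G (rcosets S) (\<lambda>g. \<lambda>A \<in> rcosets S. A #> inv g)"
proof -
  interpret S: subgroup S G by fact
  let ?f = "\<lambda>g. \<lambda>A \<in> rcosets S. A #> inv g"
  have closed: "A #> inv g \<in> rcosets S" if A: "A \<in> rcosets S" and g: "g \<in> carrier G" for A g
  proof -
    obtain a where a: "a \<in> carrier G" "A = S #> a" using A unfolding RCOSETS_def by auto
    then have "A #> inv g = S #> (a \<otimes> inv g)" using coset_mult_assoc S.subset g by simp
    then show ?thesis using a g unfolding RCOSETS_def by auto
  qed
  have carrier: "A \<subseteq> carrier G" if "A \<in> rcosets S" for A
    using that S.rcosets_carrier is_group by blast
  have bij: "?f g \<in> Bij (rcosets S)" if g: "g \<in> carrier G" for g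
  proof -
    have "bij_betw (?f g) (rcosets S) (rcosets S)"
    proof (rule bij_betwI[where g = "?f (inv g)"])
      show "?f g \<in> rcosets S \<rightarrow> rcosets S" using closed g by auto
      show "?f (inv g) \<in> rcosets S \<rightarrow> rcosets S" using closed[of _ "inv g"] g by auto
      fix A assume A: "A \<in> rcosets S"
      show "?f (inv g) (?f g A) = A" "?f g (?f (inv g) A) = A"
        using A g closed closed[of A "inv g"] carrier[OF A]
        by (simp_all add: coset_mult_assoc coset_mult_one)
    qed
    then show ?thesis unfolding Bij_def by auto
  qed
  have "?f \<in> hom G (BijGroup (rcosets S))"
    unfolding hom_def
  proof (intro CollectI conjI ballI)
    show "?f \<in> carrier G \<rightarrow> carrier (BijGroup (rcosets S))"
      using bij unfolding BijGroup_def by auto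
    fix g h assume g: "g \<in> carrier G" and h: "h \<in> carrier G"
    have "A #> inv (g \<otimes> h) = (A #> inv h) #> inv g" if "A \<in> rcosets S" for A
      using carrier[OF that] g h by (simp add: coset_mult_assoc inv_mult_group)
    then show "?f (g \<otimes> h) = ?f g \<otimes>\<^bsub>BijGroup (rcosets S)\<^esub> ?f h"
      using bij[OF g] bij[OF h] unfolding BijGroup_def
      by (auto simp: compose_def g h closed intro!: ext)
  qed
  then show ?thesis
    unfolding group_action_def group_hom_def
    by (simp add: group_BijGroup group_hom_axioms.intro is_group)
qed

lemma p_subgroup_le_conj_of_coprime_index:
  assumes fin: "finite (carrier G)" and p: "Factorial_Ring.prime p"
    and S: "subgroup S G" and Q: "subgroup Q G" and card_Q: "card Q = p ^ n"
    and index: "order G = card S * t" "\<not> p dvd t"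
  shows "\<exists>g\<in>carrier G. Q \<subseteq> conj_set G g S"
proof -
  interpret S: subgroup S G by fact
  interpret Q: subgroup Q G by fact
  let ?Q = "G\<lparr>carrier := Q\<rparr>" and ?f = "\<lambda>g. \<lambda>A \<in> rcosets S. A #> inv g"
  interpret action: group_action ?Q "rcosets S" ?f
    using group_action.induced_action[OF rcosets_action[OF S] Q] .
  have "card (rcosets S) = t"
    using lagrange[OF S] index(1) S.finite_imp_card_positive[OF fin]
    by (metis mult.commute mult_right_cancel not_gr0)
  then obtain A where A: "A \<in> rcosets S" "orbit ?Q ?f A = {A}"
    using action.p_group_action_fixed_point[OF _ p, of n] fin index(2) card_Q
    by (auto simp: RCOSETS_def order_def)
  obtain a where a: "a \<in> carrier G" "A = S #> a" using A(1) unfolding RCOSETS_def by auto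
  show ?thesis
  proof (intro bexI[of _ "inv a"] subsetI)
    show inv_a: "inv a \<in> carrier G" using a by simp
    fix q assume q: "q \<in> Q"
    have qc: "q \<in> carrier G" using q Q.subset by auto
    have "?f (inv q) A \<in> orbit ?Q ?f A" unfolding orbit_def using q by (auto intro!: exI[of _ "inv q"])
    then have "A #> inv (inv q) = A" using A by simp
    then have "S #> (a \<otimes> q) = S #> a" using a qc S.subset by (simp add: coset_mult_assoc)
    moreover have "a \<otimes> q \<in> S #> (a \<otimes> q)" using a qc S by (simp add: rcos_self)
    ultimately obtain s where s: "s \<in> S" "a \<otimes> q = s \<otimes> a" unfolding r_coset_def by auto
    have "inv (inv a) \<otimes> q \<otimes> inv a = s" using s a qc S.subset by (auto simp: m_assoc)
    then show "q \<in> conj_set G (inv a) S" using mem_conj_set_iff[OF inv_a S.subset qc] s by simp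
  qed
qed

end

lemma sum_card_Collect_swap:
  assumes "finite A" "finite B"
  shows "(\<Sum>y\<in>A. card {g\<in>B. R y g}) = (\<Sum>g\<in>B. card {y\<in>A. R y g})"
proof -
  have "(\<Sum>y\<in>A. card {g\<in>B. R y g}) = (\<Sum>y\<in>A. \<Sum>g\<in>B. if R y g then 1 else 0)"
    using assms by (simp add: sum.If_cases Int_def)
  also have "\<dots> = (\<Sum>g\<in>B. \<Sum>y\<in>A. if R y g then 1 else 0)" by (rule sum.swap)
  also have "\<dots> = (\<Sum>g\<in>B. card {y\<in>A. R y g})"
    using assms by (simp add: sum.If_cases Int_def)
  finally show ?thesis .
qed

lemma prime_power_dvd_coprime_mult_imp_le:
  fixes p :: nat
  assumes "Factorial_Ring.prime p" "\<not> p dvd m" "p ^ a dvd p ^ b * m" shows "a \<le> b"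
proof (rule ccontr)
  assume "\<not> a \<le> b"
  then have "Suc b \<le> a" by simp
  then have "p ^ Suc b dvd p ^ a" by (rule le_imp_power_dvd)
  then have "p ^ b * p dvd p ^ b * m" using assms(3) dvd_trans by (metis power_Suc2)
  then have "p dvd m" using prime_gt_0_nat[OF assms(1)] by simp
  then show False using assms(2) by simp
qed

lemma dvd_prime_power_pred_mult_iff:
  fixes p :: nat
  assumes p: "Factorial_Ring.prime p" and nd: "\<not> p dvd m" and d: "d dvd p ^ r * m" and k: "k \<ge> 1"
  shows "d dvd p ^ (k - 1) * m \<longleftrightarrow> \<not> p ^ k dvd d"
proof
  assume "d dvd p ^ (k - 1) * m"
  then show "\<not> p ^ k dvd d"
    using prime_power_dvd_coprime_mult_imp_le[OF p nd, of k "k - 1"] k dvd_trans by fastforce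
next
  assume not_dvd: "\<not> p ^ k dvd d"
  have "m \<noteq> 0" using nd by (cases "m = 0") auto
  then have "p ^ r * m \<noteq> 0" using prime_gt_0_nat[OF p] by simp
  then have "d \<noteq> 0" using d by (metis dvd_0_left)
  then obtain b where b: "d = p ^ multiplicity p d * b" "\<not> p dvd b"
    using multiplicity_decompose'[of d p] p not_prime_unit by metis
  have "b dvd p ^ r * m" using b(1) d by (metis dvd_mult_right)
  moreover have "coprime b (p ^ r)" using prime_imp_coprime[OF p b(2)] by (simp add: coprime_commute)
  ultimately have "b dvd m" using coprime_dvd_mult_right_iff by blast
  moreover have "multiplicity p d < k" using not_dvd multiplicity_dvd' not_less by blast
  then have "p ^ multiplicity p d dvd p ^ (k - 1)" by (simp add: le_imp_power_dvd)
  ultimately show "d dvd p ^ (k - 1) * m" using b(1) by (metis mult_dvd_mono)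
qed

section \<open>Finite groups with cyclic Sylow \<open>p\<close>-subgroups\<close>

locale cyclic_sylow = group G for G (structure) +
  fixes p r m :: nat
  assumes fin: "finite (carrier G)"
    and prime: "Factorial_Ring.prime p"
    and order_eq: "order G = p ^ r * m"
    and coprime_index: "\<not> p dvd m"
    and sylow_cyclic: "\<And>P. subgroup P G \<Longrightarrow> card P = p ^ r \<Longrightarrow> cyclic_group (G\<lparr>carrier := P\<rparr>)"
begin

definition sylow :: "'a set \<Rightarrow> bool" where
  "sylow P \<longleftrightarrow> subgroup P G \<and> card P = p ^ r"

definition Omega :: "nat \<Rightarrow> 'a set \<Rightarrow> 'a set" where
  "Omega j P = {z \<in> P. z [^] (p ^ j) = \<one>}"

lemma p_gt_1: "p > 1"
  using prime prime_gt_1_nat by blast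

lemma finite_subgroup: "subgroup H G \<Longrightarrow> finite H"
  using fin subgroup.subset finite_subset by blast

lemma sylow_exists: "\<exists>P. sylow P"
  using sylow_thm[OF prime is_group order_eq fin] unfolding sylow_def by blast

lemma sylow_generator:
  assumes "sylow P"
  shows "\<exists>a\<in>P. P = {a [^] (i::nat) | i. True} \<and> ord a = p ^ r"
proof -
  have sP: "subgroup P G" and cP: "card P = p ^ r" using assms unfolding sylow_def by auto
  interpret P: subgroup P G by fact
  have "cyclic_group (G\<lparr>carrier := P\<rparr>)" using sylow_cyclic sP cP by blast
  then obtain x where x: "x \<in> P" "P = range (\<lambda>n::int. x [^]\<^bsub>G\<lparr>carrier := P\<rparr>\<^esub> n)"
    using group.cyclic_group[OF subgroup_imp_group[OF sP]] by auto
  have xc: "x \<in> carrier G" using x P.subset by auto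
  have "P = range (\<lambda>n::int. x [^] n)"
    using x(2) int_pow_consistent[OF sP x(1)] by simp
  then have P_gen: "P = generate G {x}" using generate_pow[OF xc] by auto
  then have "P = {x [^] (i::nat) | i. True}" using generate_pow_on_finite_carrier[OF fin xc] by auto
  moreover have "ord x = p ^ r" using generate_pow_card[OF xc] P_gen cP by simp
  ultimately show ?thesis using x(1) by blast
qed

lemma sylow_subset_carrier: "sylow P \<Longrightarrow> P \<subseteq> carrier G"
  unfolding sylow_def using subgroup.subset by blast

lemma finite_sylow: "sylow P \<Longrightarrow> finite P"
  using sylow_subset_carrier fin finite_subset by blast

lemma sylow_commute: assumes "sylow P" "x \<in> P" "y \<in> P" shows "x \<otimes> y = y \<otimes> x"
proof -
  obtain a where a: "a \<in> P" "P = {a [^] (i::nat) | i. True}" using sylow_generator[OF assms(1)] by blast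
  have ac: "a \<in> carrier G" using a sylow_subset_carrier assms(1) by auto
  obtain i j where "x = a [^] (i::nat)" "y = a [^] (j::nat)" using a assms by auto
  then show ?thesis using ac by (metis nat_pow_mult add.commute)
qed

lemma sylow_pow_exponent: assumes "sylow P" "z \<in> P" shows "z [^] (p ^ r) = \<one>"
  using nat_pow_card_subgroup assms unfolding sylow_def by metis

lemma sylow_conj_set: "sylow P \<Longrightarrow> g \<in> carrier G \<Longrightarrow> sylow (conj_set G g P)"
  unfolding sylow_def using subgroup_conj_set card_conj_set[OF _ subgroup.subset] by simp

lemma Omega_subset: "Omega j P \<subseteq> P"
  unfolding Omega_def by auto

lemma Omega_mono: assumes "sylow P" "i \<le> j" shows "Omega i P \<subseteq> Omega j P"
proof
  fix z assume z: "z \<in> Omega i P"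
  then have zc: "z \<in> carrier G" using sylow_subset_carrier[OF assms(1)] unfolding Omega_def by auto
  have "p ^ j = p ^ i * p ^ (j - i)" using assms(2) by (simp add: power_add[symmetric])
  then have "z [^] (p ^ j) = (z [^] (p ^ i)) [^] (p ^ (j - i))" using zc by (simp add: nat_pow_pow)
  then show "z \<in> Omega j P" using z unfolding Omega_def by auto
qed

lemma subgroup_Omega: assumes P: "sylow P" shows "subgroup (Omega j P) G"
proof
  have Pc: "P \<subseteq> carrier G" using sylow_subset_carrier[OF P] .
  interpret P: subgroup P G using P unfolding sylow_def by blast
  show "Omega j P \<subseteq> carrier G" using Pc Omega_subset by blast
  show "\<one> \<in> Omega j P" unfolding Omega_def by simp
  fix x y assume x: "x \<in> Omega j P" and y: "y \<in> Omega j P"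
  have xc: "x \<in> carrier G" "y \<in> carrier G" using x y Pc unfolding Omega_def by auto
  have "(x \<otimes> y) [^] (p ^ j) = x [^] (p ^ j) \<otimes> y [^] (p ^ j)"
    using pow_mult_distrib[OF sylow_commute[OF P] xc] x y unfolding Omega_def by auto
  then show "x \<otimes> y \<in> Omega j P" using x y unfolding Omega_def by auto
  have "(inv x) [^] (p ^ j) = inv (x [^] (p ^ j))" using nat_pow_inv xc by blast
  then show "inv x \<in> Omega j P" using x unfolding Omega_def by auto
qed

lemma Omega_sylow_eq_image:
  assumes a: "a \<in> carrier G" "P = {a [^] (i::nat) | i. True}" "ord a = p ^ r" and j: "j \<le> r"
  shows "Omega j P = (\<lambda>t. a [^] (t * p ^ (r - j))) ` {..<p ^ j}"
proof (intro equalityI subsetI)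
  have pr: "p ^ r = p ^ j * p ^ (r - j)" using j by (simp add: power_add[symmetric])
  have a_pow: "a [^] (p ^ r) = \<one>" using a(1,3) pow_ord_eq_1 by metis
  fix z assume z: "z \<in> Omega j P"
  then obtain i where i: "z = a [^] (i::nat)" using a unfolding Omega_def by auto
  have "a [^] (i * p ^ j) = \<one>" using z i a unfolding Omega_def by (simp add: nat_pow_pow)
  then have "p ^ r dvd i * p ^ j" using pow_eq_id a by simp
  then have "p ^ (r - j) dvd i" using pr p_gt_1 by (simp add: mult.commute)
  then obtain t where t: "i = t * p ^ (r - j)" by (metis dvdE mult.commute)
  have "i = (t mod p ^ j) * p ^ (r - j) + p ^ r * (t div p ^ j)"
    unfolding t pr by (metis add.commute mult.assoc mult.commute mult_div_mod_eq distrib_right)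
  then have "z = a [^] ((t mod p ^ j) * p ^ (r - j)) \<otimes> (a [^] (p ^ r)) [^] (t div p ^ j)"
    using i a by (simp add: nat_pow_mult[symmetric] nat_pow_pow)
  then have "z = a [^] ((t mod p ^ j) * p ^ (r - j))" using a a_pow by simp
  moreover have "t mod p ^ j < p ^ j" using p_gt_1 by simp
  ultimately show "z \<in> (\<lambda>t. a [^] (t * p ^ (r - j))) ` {..<p ^ j}" by auto
next
  have pr: "p ^ r = p ^ j * p ^ (r - j)" using j by (simp add: power_add[symmetric])
  have a_pow: "a [^] (p ^ r) = \<one>" using a(1,3) pow_ord_eq_1 by metis
  fix z assume "z \<in> (\<lambda>t. a [^] (t * p ^ (r - j))) ` {..<p ^ j}"
  then obtain t where t: "z = a [^] (t * p ^ (r - j))" by auto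
  have "z [^] (p ^ j) = (a [^] (p ^ r)) [^] t" using t a pr by (simp add: nat_pow_pow algebra_simps)
  then show "z \<in> Omega j P" unfolding Omega_def using t a a_pow by auto
qed

lemma card_Omega: assumes P: "sylow P" and j: "j \<le> r" shows "card (Omega j P) = p ^ j"
proof -
  obtain a where a: "a \<in> P" "P = {a [^] (i::nat) | i. True}" "ord a = p ^ r"
    using sylow_generator[OF P] by blast
  have ac: "a \<in> carrier G" using a sylow_subset_carrier P by auto
  have pr: "p ^ r = p ^ j * p ^ (r - j)" using j by (simp add: power_add[symmetric])
  have "inj_on (\<lambda>t. a [^] (t * p ^ (r - j))) {..<p ^ j}"
  proof (rule inj_onI)
    fix s t assume "s \<in> {..<p ^ j}" "t \<in> {..<p ^ j}" and eq: "a [^] (s * p ^ (r - j)) = a [^] (t * p ^ (r - j))"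
    then have "s * p ^ (r - j) < p ^ r" "t * p ^ (r - j) < p ^ r" using pr p_gt_1 by auto
    then have "s * p ^ (r - j) = t * p ^ (r - j)"
      using inj_onD[OF ord_inj[OF ac] eq] a(3) by auto
    then show "s = t" using p_gt_1 by simp
  qed
  then show ?thesis using Omega_sylow_eq_image[OF ac a(2,3) j] card_image by (metis card_lessThan)
qed

lemma subgroup_of_sylow_eq_Omega:
  assumes P: "sylow P" and R: "subgroup R G" "R \<subseteq> P" and card_R: "card R = p ^ j"
  shows "R = Omega j P" "j \<le> r"
proof -
  have "card R \<le> card P" using card_mono[OF finite_sylow[OF P] R(2)] .
  then have "p ^ j \<le> p ^ r" using card_R P unfolding sylow_def by simp
  then show jr: "j \<le> r" using p_gt_1 power_le_imp_le_exp by blast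
  have "R \<subseteq> Omega j P"
    using nat_pow_card_subgroup[OF R(1)] R(2) card_R unfolding Omega_def by auto
  moreover have "finite (Omega j P)" using finite_sylow[OF P] Omega_subset finite_subset by blast
  moreover have "card R = card (Omega j P)" using card_Omega[OF P jr] card_R by simp
  ultimately show "R = Omega j P" using card_subset_eq by blast
qed

lemma conj_set_Omega:
  assumes P: "sylow P" and g: "g \<in> carrier G" shows "conj_set G g (Omega j P) = Omega j (conj_set G g P)"
proof (intro equalityI subsetI)
  have Pc: "P \<subseteq> carrier G" using sylow_subset_carrier[OF P] .
  fix w assume "w \<in> conj_set G g (Omega j P)"
  then obtain z where z: "z \<in> P" "z [^] (p ^ j) = \<one>" "w = g \<otimes> z \<otimes> inv g"
    unfolding conj_set_def Omega_def by auto
  have "w [^] (p ^ j) = \<one>" using z Pc g nat_pow_conj[OF g, of z "p ^ j"] by auto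
  moreover have "w \<in> conj_set G g P" using z conj_set_memI by simp
  ultimately show "w \<in> Omega j (conj_set G g P)" unfolding Omega_def by simp
next
  have Pc: "P \<subseteq> carrier G" using sylow_subset_carrier[OF P] .
  fix w assume "w \<in> Omega j (conj_set G g P)"
  then obtain z where z: "z \<in> P" "w = g \<otimes> z \<otimes> inv g" "w [^] (p ^ j) = \<one>"
    unfolding conj_set_def Omega_def by auto
  have zc: "z \<in> carrier G" using z Pc by auto
  have "z [^] (p ^ j) = \<one>" using z nat_pow_conj[OF g zc, of "p ^ j"] conj_eq_one_iff[OF g] zc by simp
  then show "w \<in> conj_set G g (Omega j P)" using z conj_set_memI[of z "Omega j P" g] unfolding Omega_def by simp
qed

lemma sylow_coprime_index:
  assumes H: "subgroup H G" and S: "sylow S" and SH: "S \<subseteq> H"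
  shows "\<exists>t. card H = card S * t \<and> \<not> p dvd t"
proof -
  interpret GH: group "G\<lparr>carrier := H\<rparr>" using subgroup_imp_group[OF H] .
  have "subgroup S (G\<lparr>carrier := H\<rparr>)" using subgroup_incl S SH H unfolding sylow_def by blast
  then have "card (rcosets\<^bsub>G\<lparr>carrier := H\<rparr>\<^esub> S) * card S = card H"
    using GH.lagrange by (simp add: order_def)
  then obtain t where t: "card H = card S * t" by (metis mult.commute)
  have "card H * card (rcosets H) = order G" using lagrange[OF H] by (simp add: mult.commute)
  then have "p ^ r * t dvd p ^ r * m" using t S order_eq unfolding sylow_def by (metis dvd_triv_left)
  then have "t dvd m" using p_gt_1 by simp
  then show ?thesis using t coprime_index dvd_trans by blast
qed

lemma p_subgroup_le_conj_sylow:
  assumes H: "subgroup H G" and S: "sylow S" and SH: "S \<subseteq> H"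
    and Q: "subgroup Q G" "Q \<subseteq> H" and card_Q: "card Q = p ^ n"
  shows "\<exists>h\<in>H. Q \<subseteq> conj_set G h S"
proof -
  interpret GH: group "G\<lparr>carrier := H\<rparr>" using subgroup_imp_group[OF H] .
  have sS: "subgroup S (G\<lparr>carrier := H\<rparr>)" using subgroup_incl S SH H unfolding sylow_def by blast
  have sQ: "subgroup Q (G\<lparr>carrier := H\<rparr>)" using subgroup_incl Q H by blast
  obtain t where t: "card H = card S * t" "\<not> p dvd t" using sylow_coprime_index[OF H S SH] by blast
  have fH: "finite (carrier (G\<lparr>carrier := H\<rparr>))" using finite_subgroup[OF H] by simp
  obtain h where h: "h \<in> H" "Q \<subseteq> conj_set (G\<lparr>carrier := H\<rparr>) h S"
    using GH.p_subgroup_le_conj_of_coprime_index[OF fH prime sS sQ card_Q _ t(2)] t(1)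
    by (auto simp: order_def)
  have "conj_set (G\<lparr>carrier := H\<rparr>) h S = conj_set G h S"
    unfolding conj_set_def using m_inv_consistent[OF H h(1)] by simp
  then show ?thesis using h by auto
qed

lemma p_subgroup_le_sylow:
  assumes "subgroup Q G" "card Q = p ^ n" shows "\<exists>T. sylow T \<and> Q \<subseteq> T"
proof -
  obtain S where S: "sylow S" using sylow_exists by blast
  obtain g where "g \<in> carrier G" "Q \<subseteq> conj_set G g S"
    using p_subgroup_le_conj_sylow[OF subgroup_self S sylow_subset_carrier[OF S] assms(1)
        subgroup.subset[OF assms(1)] assms(2)] by blast
  then show ?thesis using sylow_conj_set[OF S] by blast
qed

lemma p_element_in_conj_sylow:
  assumes H: "subgroup H G" and S: "sylow S" and SH: "S \<subseteq> H"
    and y: "y \<in> H" "y [^] (p ^ r) = \<one>"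
  shows "\<exists>h\<in>H. y \<in> conj_set G h S"
proof -
  have yc: "y \<in> carrier G" using y H subgroup.subset by blast
  have "ord y dvd p ^ r" using pow_eq_id[OF yc] y by simp
  then obtain i where "ord y = p ^ i" using divides_primepow_nat[OF prime] by blast
  then have "card (generate G {y}) = p ^ i" using generate_pow_card[OF yc] by simp
  moreover have "generate G {y} \<subseteq> H" using generate_subgroup_incl[OF _ H] y by simp
  ultimately obtain h where "h \<in> H" "generate G {y} \<subseteq> conj_set G h S"
    using p_subgroup_le_conj_sylow[OF H S SH generate_is_subgroup] yc by blast
  moreover have "y \<in> generate G {y}" by (simp add: generate.incl)
  ultimately show ?thesis by blast
qed

lemma nontrivial_p_subgroup_exponent:
  assumes "subgroup Q G" "card Q = p ^ n" "Q \<noteq> {\<one>}" shows "n \<ge> 1"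
proof (rule ccontr)
  assume "\<not> n \<ge> 1"
  then have "card Q = 1" using assms(2) by simp
  then obtain a where "Q = {a}" using card_1_singletonE by blast
  then show False using subgroup.one_closed[OF assms(1)] assms(3) by auto
qed

lemma p_subgroup_exponent_le: "subgroup Q G \<Longrightarrow> card Q = p ^ n \<Longrightarrow> n \<le> r"
  using p_subgroup_le_sylow subgroup_of_sylow_eq_Omega(2) by metis

section \<open>The \<open>p\<close>-part of an element\<close>

text \<open>Since \<open>gcd m (p ^ r) = 1\<close> there are exponents \<open>e\<close>, \<open>f\<close> with \<open>m dvd e\<close>, \<open>p ^ r dvd f\<close> and
  \<open>e + f \<equiv> 1 (mod order G)\<close>; then \<open>x [^] e\<close> and \<open>x [^] f\<close> are the \<open>p\<close>-part and the
  \<open>p'\<close>-part of \<open>x\<close>.\<close>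

definition p_exps :: "nat \<times> nat" where
  "p_exps = (SOME (e, f). m dvd e \<and> p ^ r dvd f \<and> (\<exists>t. e + f = order G * t + 1))"

definition p_part :: "'a \<Rightarrow> 'a" where
  "p_part x = x [^] fst p_exps"

definition p'_part :: "'a \<Rightarrow> 'a" where
  "p'_part x = x [^] snd p_exps"

lemma p_exps_exist: "\<exists>e f. m dvd e \<and> p ^ r dvd f \<and> (\<exists>t. e + f = order G * t + 1)"
proof -
  have m_pos: "m > 0" using coprime_index by (cases "m = 0") auto
  have "coprime p m" using prime_imp_coprime[OF prime coprime_index] .
  then have "coprime m (p ^ r)" by (simp add: coprime_commute)
  then have "gcd m (p ^ r) = 1" by simp
  then obtain x y where xy: "m * x = p ^ r * y + 1" using bezout_nat[of m "p ^ r"] m_pos by auto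
  have "p ^ r * y * m = p ^ r * y * ((m - 1) + 1)" using m_pos by simp
  also have "\<dots> = p ^ r * y * (m - 1) + p ^ r * y" by (simp only: distrib_left mult_1_right)
  finally have "p ^ r * y + p ^ r * y * (m - 1) = p ^ r * y * m" by simp
  then have "m * x + p ^ r * y * (m - 1) = order G * y + 1"
    using xy order_eq by (simp add: mult.commute mult.left_commute)
  then show ?thesis by (intro exI[of _ "m * x"] exI[of _ "p ^ r * y * (m - 1)"]) auto
qed

lemma p_exps:
  "m dvd fst p_exps" "p ^ r dvd snd p_exps" "\<exists>t. fst p_exps + snd p_exps = order G * t + 1"
  using someI_ex[of "\<lambda>(e, f). m dvd e \<and> p ^ r dvd f \<and> (\<exists>t. e + f = order G * t + 1)"] p_exps_exist
  unfolding p_exps_def[symmetric] by (auto simp: case_prod_beta)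

lemma p_part_closed [simp]: "x \<in> carrier G \<Longrightarrow> p_part x \<in> carrier G"
  unfolding p_part_def by simp

lemma p'_part_closed [simp]: "x \<in> carrier G \<Longrightarrow> p'_part x \<in> carrier G"
  unfolding p'_part_def by simp

lemma nat_pow_order_mult: "x \<in> carrier G \<Longrightarrow> x [^] (order G * n) = \<one>"
  by (simp add: nat_pow_pow[symmetric] pow_order_eq_1)

lemma p_part_mult_p'_part: assumes "x \<in> carrier G" shows "p_part x \<otimes> p'_part x = x"
proof -
  obtain t where "fst p_exps + snd p_exps = order G * t + 1" using p_exps(3) by blast
  then have "p_part x \<otimes> p'_part x = x [^] (order G * t) \<otimes> x"
    unfolding p_part_def p'_part_def using assms by (simp add: nat_pow_mult)
  then show ?thesis using assms nat_pow_order_mult by simp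
qed

lemma p_part_p'_part_commute: "x \<in> carrier G \<Longrightarrow> p_part x \<otimes> p'_part x = p'_part x \<otimes> p_part x"
  unfolding p_part_def p'_part_def by (simp add: nat_pow_mult add.commute)

lemma p_part_commute:
  "x \<in> carrier G \<Longrightarrow> g \<in> carrier G \<Longrightarrow> x \<otimes> g = g \<otimes> x \<Longrightarrow> p_part x \<otimes> g = g \<otimes> p_part x"
  unfolding p_part_def using group_commutes_pow by blast

lemma p_part_pow_exponent: assumes "x \<in> carrier G" shows "p_part x [^] (p ^ r) = \<one>"
proof -
  obtain k where "fst p_exps = m * k" using p_exps(1) by blast
  then have "p_part x [^] (p ^ r) = x [^] (order G * k)"
    unfolding p_part_def using assms order_eq by (simp add: nat_pow_pow mult_ac)
  then show ?thesis using assms nat_pow_order_mult by simp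
qed

lemma p'_part_pow_index: assumes "x \<in> carrier G" shows "p'_part x [^] m = \<one>"
proof -
  obtain k where "snd p_exps = p ^ r * k" using p_exps(2) by blast
  then have "p'_part x [^] m = x [^] (order G * k)"
    unfolding p'_part_def using assms order_eq by (simp add: nat_pow_pow mult_ac)
  then show ?thesis using assms nat_pow_order_mult by simp
qed

lemma p_part_of_p'_element: assumes "u \<in> carrier G" "u [^] m = \<one>" shows "p_part u = \<one>"
proof -
  obtain k where "fst p_exps = m * k" using p_exps(1) by blast
  then show ?thesis unfolding p_part_def using assms by (simp add: nat_pow_pow[symmetric])
qed

lemma p'_part_of_p_element: assumes "y \<in> carrier G" "y [^] (p ^ r) = \<one>" shows "p'_part y = \<one>"
proof -
  obtain k where "snd p_exps = p ^ r * k" using p_exps(2) by blast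
  then show ?thesis unfolding p'_part_def using assms by (simp add: nat_pow_pow[symmetric])
qed

lemma p_part_of_p_element: assumes "y \<in> carrier G" "y [^] (p ^ r) = \<one>" shows "p_part y = y"
  using p_part_mult_p'_part[OF assms(1)] p'_part_of_p_element[OF assms] assms(1) by simp

lemma p_part_of_commuting_mult:
  assumes y: "y \<in> carrier G" "y [^] (p ^ r) = \<one>" and u: "u \<in> carrier G" "u [^] m = \<one>"
    and comm: "y \<otimes> u = u \<otimes> y"
  shows "p_part (y \<otimes> u) = y"
proof -
  have "p_part (y \<otimes> u) = p_part y \<otimes> p_part u"
    unfolding p_part_def using pow_mult_distrib[OF comm y(1) u(1)] by simp
  then show ?thesis using p_part_of_p_element[OF y] p_part_of_p'_element[OF u] y by simp
qed

lemma subgroup_p_part: "subgroup H G \<Longrightarrow> x \<in> H \<Longrightarrow> p_part x \<in> H"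
  unfolding p_part_def by (rule subgroup_nat_pow_closed)

lemma subgroup_p'_part: "subgroup H G \<Longrightarrow> x \<in> H \<Longrightarrow> p'_part x \<in> H"
  unfolding p'_part_def by (rule subgroup_nat_pow_closed)

lemma p_element_pow_iff:
  assumes y: "y \<in> carrier G" "y [^] (p ^ r) = \<one>"
  shows "y [^] (p ^ j * m) = \<one> \<longleftrightarrow> y [^] (p ^ j) = \<one>"
proof
  assume "y [^] (p ^ j * m) = \<one>"
  moreover have "ord y dvd p ^ r" using y pow_eq_id by blast
  then obtain a where a: "ord y = p ^ a" using divides_primepow_nat[OF prime] by blast
  ultimately have "p ^ a dvd p ^ j * m" using pow_eq_id[OF y(1)] by simp
  then have "a \<le> j" using prime_power_dvd_coprime_mult_imp_le[OF prime coprime_index] by blast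
  then show "y [^] (p ^ j) = \<one>" using a pow_eq_id[OF y(1)] by (simp add: le_imp_power_dvd)
next
  assume "y [^] (p ^ j) = \<one>"
  then show "y [^] (p ^ j * m) = \<one>" using y by (simp add: nat_pow_pow[symmetric])
qed

lemma prime_power_dvd_ord_iff:
  assumes x: "x \<in> carrier G" and k: "k \<ge> 1"
  shows "p ^ k dvd ord x \<longleftrightarrow> p_part x [^] (p ^ (k - 1)) \<noteq> \<one>"
proof -
  have "ord x dvd p ^ r * m" using ord_dvd_group_order[OF x] order_eq by simp
  then have "p ^ k dvd ord x \<longleftrightarrow> x [^] (p ^ (k - 1) * m) \<noteq> \<one>"
    using dvd_prime_power_pred_mult_iff[OF prime coprime_index _ k] pow_eq_id[OF x] by blast
  moreover have "x [^] (p ^ (k - 1) * m) = p_part x [^] (p ^ (k - 1) * m)"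
  proof -
    have "x [^] (p ^ (k - 1) * m) = p_part x [^] (p ^ (k - 1) * m) \<otimes> p'_part x [^] (p ^ (k - 1) * m)"
      using pow_mult_distrib[OF p_part_p'_part_commute[OF x]] p_part_mult_p'_part[OF x] x by simp
    moreover have "p'_part x [^] (p ^ (k - 1) * m) = \<one>"
      using p'_part_pow_index[OF x] x by (simp add: mult.commute nat_pow_pow[symmetric])
    ultimately show ?thesis using x by simp
  qed
  ultimately show ?thesis using p_element_pow_iff[OF p_part_closed[OF x] p_part_pow_exponent[OF x]] by simp
qed

section \<open>Burnside subgroups\<close>

definition centralizer_in :: "'a set \<Rightarrow> 'a \<Rightarrow> 'a set" where
  "centralizer_in H y = centralizer_set G {y} \<inter> H"

text \<open>Burnside's condition \<open>N\<^sub>H(P) = Z\<^sub>H(P)\<close> for the Sylow subgroups \<open>P\<close> of \<open>H\<close>; it is only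
  used through the resulting count of \<open>p'\<close>-elements, not through a normal \<open>p\<close>-complement.\<close>

definition burnside_subgroup :: "'a set \<Rightarrow> bool" where
  "burnside_subgroup H \<longleftrightarrow> subgroup H G \<and> (\<exists>S. sylow S \<and> S \<subseteq> H) \<and>
     (\<forall>P g. sylow P \<longrightarrow> P \<subseteq> H \<longrightarrow> g \<in> H \<longrightarrow> conj_set G g P = P \<longrightarrow> (\<forall>x\<in>P. g \<otimes> x = x \<otimes> g))"

lemma subgroup_centralizer_in: "subgroup H G \<Longrightarrow> y \<in> carrier G \<Longrightarrow> subgroup (centralizer_in H y) G"
  unfolding centralizer_in_def using subgroups_Inter_pair subgroup_centralizer_set by auto

lemma conj_set_sylow_subset_centralizer_in:
  assumes H: "subgroup H G" and P: "sylow P" "P \<subseteq> H" and y: "y \<in> P" and g: "g \<in> H"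
  shows "conj_set G g P \<subseteq> centralizer_in H (g \<otimes> y \<otimes> inv g)"
proof
  interpret H: subgroup H G by fact
  have Pc: "P \<subseteq> carrier G" using sylow_subset_carrier[OF P(1)] .
  have gc: "g \<in> carrier G" and yc: "y \<in> carrier G" using g y Pc H.subset by auto
  fix w assume "w \<in> conj_set G g P"
  then obtain a where a: "a \<in> P" "w = g \<otimes> a \<otimes> inv g" unfolding conj_set_def by auto
  have ac: "a \<in> carrier G" using a Pc by auto
  have "w \<otimes> (g \<otimes> y \<otimes> inv g) = g \<otimes> (a \<otimes> y) \<otimes> inv g" using a ac yc gc by (simp add: m_assoc)
  also have "\<dots> = g \<otimes> (y \<otimes> a) \<otimes> inv g" using sylow_commute[OF P(1) a(1) y] by simp
  also have "\<dots> = (g \<otimes> y \<otimes> inv g) \<otimes> w" using a ac yc gc by (simp add: m_assoc)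
  finally have "w \<otimes> (g \<otimes> y \<otimes> inv g) = (g \<otimes> y \<otimes> inv g) \<otimes> w" .
  moreover have "w \<in> H" using a g P(2) by (simp add: H.m_closed H.m_inv_closed subsetD)
  ultimately show "w \<in> centralizer_in H (g \<otimes> y \<otimes> inv g)"
    unfolding centralizer_in_def centralizer_set_def using a ac gc by auto
qed

text \<open>\<open>P\<close> and its conjugate by \<open>g\<close> are Sylow subgroups of the centralizer \<open>K\<close> of
  \<open>z = g y g\<inverse>\<close> in \<open>H\<close>, hence conjugate by some \<open>c \<in> K\<close>; then \<open>c\<inverse> g\<close> normalizes \<open>P\<close>, so it
  centralizes \<open>y\<close>, and \<open>y = c\<inverse> z c = z\<close>.\<close>

lemma burnside_subgroup_conj_in_sylow:
  assumes H: "burnside_subgroup H" and P: "sylow P" "P \<subseteq> H" and y: "y \<in> P" and g: "g \<in> H"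
    and conj_in: "g \<otimes> y \<otimes> inv g \<in> P"
  shows "g \<otimes> y \<otimes> inv g = y"
proof -
  have sH: "subgroup H G" using H unfolding burnside_subgroup_def by auto
  interpret H: subgroup H G by fact
  have Pc: "P \<subseteq> carrier G" using sylow_subset_carrier[OF P(1)] .
  have gc: "g \<in> carrier G" using g H.subset by auto
  have yc: "y \<in> carrier G" using y Pc by auto
  define z where "z = g \<otimes> y \<otimes> inv g"
  have zc: "z \<in> carrier G" using gc yc z_def by simp
  define K where "K = centralizer_in H z"
  have K: "subgroup K G" unfolding K_def using subgroup_centralizer_in[OF sH zc] .
  have PK: "P \<subseteq> K"
    unfolding K_def centralizer_in_def centralizer_set_def
    using P Pc conj_in sylow_commute[OF P(1)] z_def by auto
  have gPK: "conj_set G g P \<subseteq> K"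
    unfolding K_def z_def using conj_set_sylow_subset_centralizer_in[OF sH P y g] .
  have KH: "K \<subseteq> H" unfolding K_def centralizer_in_def by auto
  obtain c where c: "c \<in> K" "conj_set G g P \<subseteq> conj_set G c P"
    using p_subgroup_le_conj_sylow[OF K P(1) PK _ gPK, of r] sylow_conj_set[OF P(1) gc]
    unfolding sylow_def by auto
  have cc: "c \<in> carrier G" using c K subgroup.subset by blast
  have "conj_set G g P = conj_set G c P"
    using c(2) card_conj_set[OF gc Pc] card_conj_set[OF cc Pc] finite_sylow[OF sylow_conj_set[OF P(1) cc]]
    by (simp add: card_subset_eq)
  then have "conj_set G (inv c \<otimes> g) P = P"
    using cc gc Pc by (simp add: conj_set_mult conj_set_inv_conj_set)
  moreover have "inv c \<otimes> g \<in> H" using c KH g by (simp add: H.m_closed H.m_inv_closed subsetD)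
  ultimately have comm: "(inv c \<otimes> g) \<otimes> y = y \<otimes> (inv c \<otimes> g)"
    using H P y unfolding burnside_subgroup_def by blast
  have cz: "c \<otimes> z = z \<otimes> c" using c unfolding K_def centralizer_in_def centralizer_set_def by auto
  have "y = (inv c \<otimes> g) \<otimes> y \<otimes> inv (inv c \<otimes> g)" using comm cc gc yc by (simp add: m_assoc)
  also have "\<dots> = inv c \<otimes> z \<otimes> c" using cc gc yc z_def by (simp add: m_assoc inv_mult_group)
  also have "\<dots> = z" using cz[symmetric] cc zc by (simp add: m_assoc)
  finally show ?thesis unfolding z_def by simp
qed

lemma conjugators_into_sylow_eq:
  assumes H: "burnside_subgroup H" and P: "sylow P" "P \<subseteq> H" and y: "y \<in> H"
    and h: "h \<in> H" "inv h \<otimes> y \<otimes> h \<in> P"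
  shows "{g\<in>H. inv g \<otimes> y \<otimes> g \<in> P} = (\<lambda>c. c \<otimes> h) ` centralizer_in H y"
proof (intro equalityI subsetI)
  have sH: "subgroup H G" using H unfolding burnside_subgroup_def by auto
  interpret H: subgroup H G by fact
  have yc: "y \<in> carrier G" and hc: "h \<in> carrier G" using y h H.subset by auto
  fix g assume "g \<in> {g\<in>H. inv g \<otimes> y \<otimes> g \<in> P}"
  then have g: "g \<in> H" "inv g \<otimes> y \<otimes> g \<in> P" by auto
  have gc: "g \<in> carrier G" using g H.subset by auto
  have k: "inv g \<otimes> h \<in> H" using g h by (simp add: H.m_closed H.m_inv_closed)
  have "(inv g \<otimes> h) \<otimes> (inv h \<otimes> y \<otimes> h) \<otimes> inv (inv g \<otimes> h) = inv g \<otimes> y \<otimes> g"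
    using gc hc yc by (simp add: m_assoc inv_mult_group)
  then have e: "inv g \<otimes> y \<otimes> g = inv h \<otimes> y \<otimes> h"
    using burnside_subgroup_conj_in_sylow[OF H P h(2) k] g(2) by simp
  define c where "c = g \<otimes> inv h"
  have cH: "c \<in> H" unfolding c_def using g h by (simp add: H.m_closed H.m_inv_closed)
  have "c \<otimes> y = g \<otimes> (inv h \<otimes> y \<otimes> h) \<otimes> inv h" unfolding c_def using gc hc yc by (simp add: m_assoc)
  also have "\<dots> = g \<otimes> (inv g \<otimes> y \<otimes> g) \<otimes> inv h" using e by simp
  also have "\<dots> = y \<otimes> c" unfolding c_def using gc hc yc by (simp add: m_assoc)
  finally have "c \<in> centralizer_in H y"
    unfolding centralizer_in_def centralizer_set_def using cH H.subset by auto
  moreover have "g = c \<otimes> h" unfolding c_def using gc hc by (simp add: m_assoc)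
  ultimately show "g \<in> (\<lambda>c. c \<otimes> h) ` centralizer_in H y" by blast
next
  have sH: "subgroup H G" using H unfolding burnside_subgroup_def by auto
  interpret H: subgroup H G by fact
  have yc: "y \<in> carrier G" and hc: "h \<in> carrier G" using y h H.subset by auto
  fix g assume "g \<in> (\<lambda>c. c \<otimes> h) ` centralizer_in H y"
  then obtain c where c: "c \<in> centralizer_in H y" "g = c \<otimes> h" by auto
  have cH: "c \<in> H" and cy: "c \<otimes> y = y \<otimes> c" and cc: "c \<in> carrier G"
    using c unfolding centralizer_in_def centralizer_set_def by auto
  have "inv g \<otimes> y \<otimes> g = inv h \<otimes> (inv c \<otimes> (y \<otimes> c)) \<otimes> h"
    using c(2) cc hc yc by (simp add: m_assoc inv_mult_group)
  also have "inv c \<otimes> (y \<otimes> c) = y" using cy[symmetric] cc yc by simp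
  finally show "g \<in> {g\<in>H. inv g \<otimes> y \<otimes> g \<in> P}" using h c cH by (simp add: H.m_closed)
qed

lemma card_conjugators_into_sylow:
  assumes H: "burnside_subgroup H" and P: "sylow P" "P \<subseteq> H" and y: "y \<in> H" "y [^] (p ^ r) = \<one>"
  shows "card {g\<in>H. inv g \<otimes> y \<otimes> g \<in> P} = card (centralizer_in H y)"
proof -
  have sH: "subgroup H G" using H unfolding burnside_subgroup_def by auto
  interpret H: subgroup H G by fact
  have Pc: "P \<subseteq> carrier G" using sylow_subset_carrier[OF P(1)] .
  have yc: "y \<in> carrier G" using y H.subset by auto
  obtain h where h: "h \<in> H" "y \<in> conj_set G h P" using p_element_in_conj_sylow[OF sH P y] by blast
  have hc: "h \<in> carrier G" using h H.subset by auto
  have "inv h \<otimes> y \<otimes> h \<in> P" using mem_conj_set_iff[OF hc Pc yc] h by simp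
  then have "{g\<in>H. inv g \<otimes> y \<otimes> g \<in> P} = (\<lambda>c. c \<otimes> h) ` centralizer_in H y"
    using conjugators_into_sylow_eq[OF H P y(1) h(1)] by simp
  moreover have "inj_on (\<lambda>c. c \<otimes> h) (centralizer_in H y)"
  proof (rule inj_onI)
    fix a b assume "a \<in> centralizer_in H y" "b \<in> centralizer_in H y" "a \<otimes> h = b \<otimes> h"
    then show "a = b" using hc right_cancel unfolding centralizer_in_def centralizer_set_def by blast
  qed
  ultimately show ?thesis by (simp add: card_image)
qed

lemma sum_card_centralizer_in_p_elements:
  assumes H: "burnside_subgroup H" and P: "sylow P" "P \<subseteq> H"
    and \<Phi>: "\<And>g y. g \<in> carrier G \<Longrightarrow> y \<in> carrier G \<Longrightarrow> \<Phi> (g \<otimes> y \<otimes> inv g) = \<Phi> y"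
  shows "(\<Sum>y\<in>{y\<in>H. y [^] (p ^ r) = \<one> \<and> \<Phi> y}. card (centralizer_in H y)) = card H * card {z\<in>P. \<Phi> z}"
proof -
  have sH: "subgroup H G" using H unfolding burnside_subgroup_def by auto
  interpret H: subgroup H G by fact
  have Pc: "P \<subseteq> carrier G" using sylow_subset_carrier[OF P(1)] .
  let ?Y = "{y\<in>H. y [^] (p ^ r) = \<one> \<and> \<Phi> y}"
  have fH: "finite H" using finite_subgroup[OF sH] .
  have "(\<Sum>y\<in>?Y. card (centralizer_in H y)) = (\<Sum>y\<in>?Y. card {g\<in>H. inv g \<otimes> y \<otimes> g \<in> P})"
    using card_conjugators_into_sylow[OF H P] by (intro sum.cong) auto
  also have "\<dots> = (\<Sum>g\<in>H. card {y\<in>?Y. inv g \<otimes> y \<otimes> g \<in> P})"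
    using fH by (intro sum_card_Collect_swap) simp_all
  also have "\<dots> = (\<Sum>g\<in>H. card {z\<in>P. \<Phi> z})"
  proof (rule sum.cong[OF refl])
    fix g assume g: "g \<in> H"
    have gc: "g \<in> carrier G" using g H.subset by auto
    have "{y\<in>?Y. inv g \<otimes> y \<otimes> g \<in> P} = conj_set G g {z\<in>P. \<Phi> z}"
    proof (intro equalityI subsetI)
      fix y assume "y \<in> {y\<in>?Y. inv g \<otimes> y \<otimes> g \<in> P}"
      then have y: "y \<in> H" "\<Phi> y" "inv g \<otimes> y \<otimes> g \<in> P" by auto
      have yc: "y \<in> carrier G" using y H.subset by auto
      have "\<Phi> (inv g \<otimes> y \<otimes> inv (inv g)) = \<Phi> y" using \<Phi>[of "inv g" y] gc yc by simp
      then have "inv g \<otimes> y \<otimes> g \<in> {z\<in>P. \<Phi> z}" using y gc by simp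
      then show "y \<in> conj_set G g {z\<in>P. \<Phi> z}" using mem_conj_set_iff[OF gc _ yc, of "{z\<in>P. \<Phi> z}"] Pc by auto
    next
      fix y assume "y \<in> conj_set G g {z\<in>P. \<Phi> z}"
      then obtain z where z: "z \<in> P" "\<Phi> z" "y = g \<otimes> z \<otimes> inv g" unfolding conj_set_def by auto
      have zc: "z \<in> carrier G" using z Pc by auto
      have "y \<in> H" using z g P(2) by (simp add: H.m_closed H.m_inv_closed subsetD)
      moreover have "y [^] (p ^ r) = \<one>" using z nat_pow_conj[OF gc zc] sylow_pow_exponent[OF P(1) z(1)] gc by simp
      moreover have "\<Phi> y" using z \<Phi> gc zc by simp
      moreover have "inv g \<otimes> y \<otimes> g \<in> P" using z gc zc by (simp add: m_assoc)
      ultimately show "y \<in> {y\<in>?Y. inv g \<otimes> y \<otimes> g \<in> P}" by simp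
    qed
    then show "card {y\<in>?Y. inv g \<otimes> y \<otimes> g \<in> P} = card {z\<in>P. \<Phi> z}"
      using card_conj_set[OF gc, of "{z\<in>P. \<Phi> z}"] Pc by auto
  qed
  finally show ?thesis by simp
qed

lemma card_p_part_fiber:
  assumes H: "subgroup H G" and y: "y \<in> H" "y [^] (p ^ r) = \<one>"
  shows "card {x\<in>H. p_part x = y} = card {u\<in>centralizer_in H y. u [^] m = \<one>}"
proof -
  interpret H: subgroup H G by fact
  have yc: "y \<in> carrier G" using y H.subset by auto
  have "{x\<in>H. p_part x = y} = (\<lambda>u. y \<otimes> u) ` {u\<in>centralizer_in H y. u [^] m = \<one>}"
  proof (intro equalityI subsetI)
    fix x assume "x \<in> {x\<in>H. p_part x = y}"
    then have x: "x \<in> H" "p_part x = y" by auto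
    have xc: "x \<in> carrier G" using x H.subset by auto
    have "p'_part x \<in> centralizer_in H y"
      unfolding centralizer_in_def centralizer_set_def
      using subgroup_p'_part[OF H x(1)] p_part_p'_part_commute[OF xc] x xc by auto
    moreover have "p'_part x [^] m = \<one>" using p'_part_pow_index[OF xc] .
    moreover have "x = y \<otimes> p'_part x" using p_part_mult_p'_part[OF xc] x by simp
    ultimately show "x \<in> (\<lambda>u. y \<otimes> u) ` {u\<in>centralizer_in H y. u [^] m = \<one>}" by blast
  next
    fix x assume "x \<in> (\<lambda>u. y \<otimes> u) ` {u\<in>centralizer_in H y. u [^] m = \<one>}"
    then obtain u where u: "u \<in> centralizer_in H y" "u [^] m = \<one>" "x = y \<otimes> u" by auto
    have uH: "u \<in> H" and uc: "u \<in> carrier G" and uy: "u \<otimes> y = y \<otimes> u"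
      using u unfolding centralizer_in_def centralizer_set_def by auto
    have "p_part x = y" using p_part_of_commuting_mult[OF yc y(2) uc u(2) uy[symmetric]] u(3) by simp
    then show "x \<in> {x\<in>H. p_part x = y}" using u uH y by (simp add: H.m_closed)
  qed
  moreover have "inj_on (\<lambda>u. y \<otimes> u) {u\<in>centralizer_in H y. u [^] m = \<one>}"
  proof (rule inj_onI)
    fix a b assume "a \<in> {u\<in>centralizer_in H y. u [^] m = \<one>}" "b \<in> {u\<in>centralizer_in H y. u [^] m = \<one>}"
      and "y \<otimes> a = y \<otimes> b"
    then show "a = b" using yc l_cancel unfolding centralizer_in_def centralizer_set_def by blast
  qed
  ultimately show ?thesis by (simp add: card_image)
qed

lemma card_by_p_part:
  assumes H: "subgroup H G"
  shows "card {x\<in>H. \<Psi> (p_part x)}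
       = (\<Sum>y\<in>{y\<in>H. y [^] (p ^ r) = \<one> \<and> \<Psi> y}. card {u\<in>centralizer_in H y. u [^] m = \<one>})"
proof -
  interpret H: subgroup H G by fact
  let ?Y = "{y\<in>H. y [^] (p ^ r) = \<one> \<and> \<Psi> y}"
  have fH: "finite H" using finite_subgroup[OF H] .
  have "(\<Sum>y\<in>?Y. card {u\<in>centralizer_in H y. u [^] m = \<one>}) = (\<Sum>y\<in>?Y. card {x\<in>H. p_part x = y})"
    using card_p_part_fiber[OF H] by (intro sum.cong) auto
  also have "\<dots> = (\<Sum>x\<in>H. card {y\<in>?Y. p_part x = y})"
    using fH by (intro sum_card_Collect_swap) simp_all
  also have "\<dots> = (\<Sum>x\<in>H. if \<Psi> (p_part x) then 1 else 0)"
  proof (rule sum.cong[OF refl])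
    fix x assume x: "x \<in> H"
    have xc: "x \<in> carrier G" using x H.subset by auto
    have "p_part x \<in> H" "p_part x [^] (p ^ r) = \<one>" using subgroup_p_part[OF H x] p_part_pow_exponent[OF xc] by auto
    then have "{y\<in>?Y. p_part x = y} = (if \<Psi> (p_part x) then {p_part x} else {})" by auto
    then show "card {y\<in>?Y. p_part x = y} = (if \<Psi> (p_part x) then 1 else 0)" by simp
  qed
  also have "\<dots> = card {x\<in>H. \<Psi> (p_part x)}" using fH by (simp add: sum.If_cases Int_def)
  finally show ?thesis by simp
qed

lemma burnside_subgroup_centralizer_in:
  assumes H: "burnside_subgroup H" and y: "y \<in> H" "y [^] (p ^ r) = \<one>"
  shows "burnside_subgroup (centralizer_in H y)"
proof -
  have sH: "subgroup H G" using H unfolding burnside_subgroup_def by auto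
  obtain S where S: "sylow S" "S \<subseteq> H" using H unfolding burnside_subgroup_def by auto
  have yc: "y \<in> carrier G" using y sH subgroup.subset by blast
  obtain h where h: "h \<in> H" "y \<in> conj_set G h S" using p_element_in_conj_sylow[OF sH S y] by blast
  have T: "sylow (conj_set G h S)" using sylow_conj_set[OF S(1)] h(1) sH subgroup.subset by blast
  have "conj_set G h S \<subseteq> centralizer_in H y"
    unfolding centralizer_in_def centralizer_set_def
    using conj_set_subset_subgroup[OF sH h(1) S(2)] sylow_subset_carrier[OF T] sylow_commute[OF T _ h(2)]
    by auto
  moreover have "subgroup (centralizer_in H y) G" using subgroup_centralizer_in[OF sH yc] .
  ultimately show ?thesis
    using H T unfolding burnside_subgroup_def centralizer_in_def by blast
qed

text \<open>Counting \<open>H\<close> by \<open>p\<close>-parts and counting the pairs \<open>(y, c)\<close> with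
  \<open>c\<close> centralizing the \<open>p\<close>-element \<open>y\<close> give two expressions for \<open>card H * p ^ r\<close>; they agree
  term by term for the proper centralizers by induction, which leaves the central \<open>p\<close>-elements.\<close>

lemma card_p'_elements_burnside:
  "burnside_subgroup H \<Longrightarrow> card {u\<in>H. u [^] m = \<one>} * p ^ r = card H"
proof (induction "card H" arbitrary: H rule: less_induct)
  case less
  have H: "burnside_subgroup H" by fact
  have sH: "subgroup H G" using H unfolding burnside_subgroup_def by auto
  interpret H: subgroup H G by fact
  obtain S where S: "sylow S" "S \<subseteq> H" using H unfolding burnside_subgroup_def by auto
  have fH: "finite H" using finite_subgroup[OF sH] .
  define Y where "Y = {y\<in>H. y [^] (p ^ r) = \<one>}"
  define s where "s K = card {u\<in>K. u [^] m = \<one>}" for K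
  define Z where "Z = {y\<in>Y. centralizer_in H y = H}"
  have fY: "finite Y" unfolding Y_def using fH by simp
  have ZY: "Z \<subseteq> Y" unfolding Z_def by auto
  have "\<one> \<in> Z" unfolding Z_def Y_def centralizer_in_def centralizer_set_def using H.subset by auto
  then have card_Z: "card Z > 0" using finite_subset[OF ZY fY] card_gt_0_iff by blast
  have IH: "s (centralizer_in H y) * p ^ r = card (centralizer_in H y)" if y: "y \<in> Y - Z" for y
  proof -
    have "centralizer_in H y \<subset> H" using y unfolding Z_def centralizer_in_def by auto
    then have "card (centralizer_in H y) < card H" using fH psubset_card_mono by blast
    then show ?thesis
      unfolding s_def using less.hyps burnside_subgroup_centralizer_in[OF H] y unfolding Y_def by blast
  qed
  have "card H * p ^ r = (\<Sum>y\<in>Y. s (centralizer_in H y) * p ^ r)"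
    using card_by_p_part[OF sH, of "\<lambda>_. True"] unfolding Y_def s_def by (simp add: sum_distrib_right)
  also have "\<dots> = (\<Sum>y\<in>Y - Z. s (centralizer_in H y) * p ^ r) + (\<Sum>y\<in>Z. s (centralizer_in H y) * p ^ r)"
    using sum.subset_diff[OF ZY fY] by simp
  also have "(\<Sum>y\<in>Y - Z. s (centralizer_in H y) * p ^ r) = (\<Sum>y\<in>Y - Z. card (centralizer_in H y))"
    using IH by (intro sum.cong) auto
  also have "(\<Sum>y\<in>Z. s (centralizer_in H y) * p ^ r) = card Z * (s H * p ^ r)"
    unfolding Z_def by simp
  finally have A: "card H * p ^ r = (\<Sum>y\<in>Y - Z. card (centralizer_in H y)) + card Z * (s H * p ^ r)" .
  have "card H * p ^ r = (\<Sum>y\<in>Y. card (centralizer_in H y))"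
    using sum_card_centralizer_in_p_elements[OF H S, of "\<lambda>_. True"] S(1) unfolding Y_def sylow_def by simp
  also have "\<dots> = (\<Sum>y\<in>Y - Z. card (centralizer_in H y)) + card Z * card H"
    using sum.subset_diff[OF ZY fY, of "\<lambda>y. card (centralizer_in H y)"] by (simp add: Z_def)
  finally have "card Z * (s H * p ^ r) = card Z * card H" using A by linarith
  then show ?case using card_Z unfolding s_def by simp
qed

lemma card_large_p_part_burnside:
  assumes H: "burnside_subgroup H" and k: "k \<ge> 1" "k \<le> r"
  shows "card {x\<in>H. p_part x [^] (p ^ (k - 1)) \<noteq> \<one>} * p ^ r = card H * (p ^ r - p ^ (k - 1))"
proof -
  have sH: "subgroup H G" using H unfolding burnside_subgroup_def by auto
  obtain S where S: "sylow S" "S \<subseteq> H" using H unfolding burnside_subgroup_def by auto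
  define Y where "Y = {y\<in>H. y [^] (p ^ r) = \<one> \<and> y [^] (p ^ (k - 1)) \<noteq> \<one>}"
  have "card {x\<in>H. p_part x [^] (p ^ (k - 1)) \<noteq> \<one>} * p ^ r
      = (\<Sum>y\<in>Y. card {u\<in>centralizer_in H y. u [^] m = \<one>} * p ^ r)"
    using card_by_p_part[OF sH, of "\<lambda>y. y [^] (p ^ (k - 1)) \<noteq> \<one>"] unfolding Y_def
    by (simp add: sum_distrib_right)
  also have "\<dots> = (\<Sum>y\<in>Y. card (centralizer_in H y))"
    using card_p'_elements_burnside burnside_subgroup_centralizer_in[OF H]
    by (intro sum.cong) (auto simp: Y_def)
  also have "\<dots> = card H * card {z\<in>S. z [^] (p ^ (k - 1)) \<noteq> \<one>}"
    using sum_card_centralizer_in_p_elements[OF H S, of "\<lambda>y. y [^] (p ^ (k - 1)) \<noteq> \<one>"]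
      nat_pow_conj conj_eq_one_iff unfolding Y_def by simp
  also have "{z\<in>S. z [^] (p ^ (k - 1)) \<noteq> \<one>} = S - Omega (k - 1) S"
    unfolding Omega_def by auto
  also have "card (S - Omega (k - 1) S) = p ^ r - p ^ (k - 1)"
    using card_Diff_subset[OF finite_subset[OF Omega_subset finite_sylow[OF S(1)]] Omega_subset]
      card_Omega[OF S(1)] k S(1) unfolding sylow_def by simp
  finally show ?thesis .
qed

text \<open>If \<open>u\<close> centralizes \<open>x [^] p\<close>, then \<open>u \<otimes> x \<otimes> inv u = f \<otimes> x\<close> with \<open>f \<in> Omega 1 P\<close>, so \<open>f\<close>
  commutes with \<open>u\<close> and \<open>x = u [^] m \<otimes> x \<otimes> inv (u [^] m) = f [^] m \<otimes> x\<close>; the order of \<open>f\<close>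
  divides both \<open>p\<close> and \<open>m\<close>.\<close>

lemma coprime_normalizing_commute_step:
  assumes P: "sylow P" and u: "u \<in> carrier G" "u [^] m = \<one>" "conj_set G u P = P"
    and Omega_comm: "\<forall>z\<in>Omega 1 P. u \<otimes> z = z \<otimes> u"
    and x: "x \<in> P" and comm_pow: "u \<otimes> x [^] p = x [^] p \<otimes> u"
  shows "u \<otimes> x = x \<otimes> u"
proof -
  interpret P: subgroup P G using P unfolding sylow_def by blast
  have xc: "x \<in> carrier G" using x P.subset by auto
  define y where "y = u \<otimes> x \<otimes> inv u"
  have yP: "y \<in> P" using u(3) conj_set_memI[OF x, of u] unfolding y_def by simp
  have yc: "y \<in> carrier G" using yP P.subset by auto
  have y_pow: "y [^] p = x [^] p"
    unfolding y_def using nat_pow_conj[OF u(1) xc, of p] comm_pow u(1) xc by (simp add: m_assoc)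
  define f where "f = y \<otimes> inv x"
  have fP: "f \<in> P" unfolding f_def using yP x by simp
  have fc: "f \<in> carrier G" using fP P.subset by auto
  have "f [^] p = y [^] p \<otimes> (inv x) [^] p"
    unfolding f_def using pow_mult_distrib[OF sylow_commute[OF P yP P.m_inv_closed[OF x]] yc] xc by simp
  then have f_p: "f [^] p = \<one>" using y_pow xc by (simp add: nat_pow_inv)
  then have uf: "u \<otimes> f = f \<otimes> u" using Omega_comm fP unfolding Omega_def by simp
  have y_eq: "y = f \<otimes> x" unfolding f_def using yc xc by (simp add: m_assoc)
  have "x = f [^] m \<otimes> x"
    using nat_pow_conj_iterate[OF u(1) xc fc _ uf, of m] y_eq u xc unfolding y_def by simp
  then have f_m: "f [^] m = \<one>" using xc fc by (metis l_one one_closed nat_pow_closed r_cancel)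
  have "ord f dvd gcd p m" using f_p f_m pow_eq_id[OF fc] by simp
  then have "f = \<one>" using prime_imp_coprime[OF prime coprime_index] ord_eq_1[OF fc] by simp
  then show ?thesis using y_eq u(1) xc unfolding y_def by (metis inv_solve_right l_one m_closed)
qed

lemma coprime_normalizing_commute:
  assumes P: "sylow P" and u: "u \<in> carrier G" "u [^] m = \<one>" "conj_set G u P = P"
    and Omega_comm: "\<forall>z\<in>Omega 1 P. u \<otimes> z = z \<otimes> u" and x: "x \<in> P"
  shows "u \<otimes> x = x \<otimes> u"
proof -
  have "\<forall>x\<in>P. x [^] (p ^ j) = \<one> \<longrightarrow> u \<otimes> x = x \<otimes> u" for j
  proof (induction j)
    case 0
    show ?case using u sylow_subset_carrier[OF P] by auto
  next
    case (Suc j)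
    show ?case
    proof (intro ballI impI)
      fix x assume x: "x \<in> P" and "x [^] (p ^ Suc j) = \<one>"
      have xc: "x \<in> carrier G" using x sylow_subset_carrier[OF P] by auto
      have "x [^] p \<in> P" using subgroup_nat_pow_closed[OF _ x] P unfolding sylow_def by blast
      moreover have "(x [^] p) [^] (p ^ j) = \<one>"
        using \<open>x [^] (p ^ Suc j) = \<one>\<close> xc by (simp add: nat_pow_pow power_Suc)
      ultimately show "u \<otimes> x = x \<otimes> u"
        using Suc.IH coprime_normalizing_commute_step[OF P u Omega_comm x] by blast
    qed
  qed
  then show ?thesis using x sylow_pow_exponent[OF P x] by blast
qed

lemma centralizer_normalizing_commute:
  assumes P: "sylow P" and Q: "subgroup Q G" "card Q = p ^ n" "Q \<noteq> {\<one>}" "Q \<subseteq> P"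
    and g: "g \<in> centralizer_set G Q" "g \<in> normalizer G P" and x: "x \<in> P"
  shows "g \<otimes> x = x \<otimes> g"
proof -
  have Pc: "P \<subseteq> carrier G" using sylow_subset_carrier[OF P] .
  have gc: "g \<in> carrier G" using g(1) unfolding centralizer_set_def by auto
  have xc: "x \<in> carrier G" using x Pc by auto
  have sN: "subgroup (normalizer G P) G" using normalizer_imp_subgroup[OF Pc] .
  have sC: "subgroup (centralizer_set G Q) G" using subgroup_centralizer_set Q(1) subgroup.subset by blast
  have "Omega 1 P \<subseteq> Q"
    using Omega_mono[OF P nontrivial_p_subgroup_exponent[OF Q(1-3)]]
      subgroup_of_sylow_eq_Omega(1)[OF P Q(1) Q(4) Q(2)] by simp
  then have "\<forall>z\<in>Omega 1 P. p'_part g \<otimes> z = z \<otimes> p'_part g"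
    using subgroup_p'_part[OF sC g(1)] unfolding centralizer_set_def by auto
  moreover have "conj_set G (p'_part g) P = P"
    using subgroup_p'_part[OF sN g(2)] normalizer_eq_conj_set[OF Pc] by simp
  ultimately have u_comm: "p'_part g \<otimes> x = x \<otimes> p'_part g"
    using coprime_normalizing_commute[OF P p'_part_closed[OF gc] p'_part_pow_index[OF gc]] x by blast
  have PN: "P \<subseteq> normalizer G P"
    using conj_set_centralizer_set[OF _ Pc] sylow_commute[OF P] Pc
    unfolding normalizer_eq_conj_set[OF Pc] centralizer_set_def by auto
  obtain c where "c \<in> normalizer G P" "p_part g \<in> conj_set G c P"
    using p_element_in_conj_sylow[OF sN P PN subgroup_p_part[OF sN g(2)] p_part_pow_exponent[OF gc]] by blast
  then have yP: "p_part g \<in> P" unfolding normalizer_eq_conj_set[OF Pc] by simp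
  have "g \<otimes> x = p_part g \<otimes> (p'_part g \<otimes> x)"
    using p_part_mult_p'_part[OF gc] gc xc by (metis m_assoc p_part_closed p'_part_closed)
  also have "\<dots> = x \<otimes> (p_part g \<otimes> p'_part g)"
    using u_comm sylow_commute[OF P yP x] gc xc by (metis m_assoc p_part_closed p'_part_closed)
  finally show ?thesis using p_part_mult_p'_part[OF gc] by simp
qed

lemma burnside_subgroup_centralizer_set:
  assumes Q: "subgroup Q G" "card Q = p ^ n" "Q \<noteq> {\<one>}"
  shows "burnside_subgroup (centralizer_set G Q)"
proof -
  have Qc: "Q \<subseteq> carrier G" using Q(1) subgroup.subset by blast
  let ?H = "centralizer_set G Q"
  have H: "subgroup ?H G" using subgroup_centralizer_set[OF Qc] .
  obtain T where T: "sylow T" "Q \<subseteq> T" using p_subgroup_le_sylow[OF Q(1,2)] by blast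
  have TH: "T \<subseteq> ?H"
    unfolding centralizer_set_def using T sylow_subset_carrier[OF T(1)] sylow_commute[OF T(1)] by blast
  have "\<forall>x\<in>P. g \<otimes> x = x \<otimes> g"
    if P: "sylow P" "P \<subseteq> ?H" and g: "g \<in> ?H" "conj_set G g P = P" for P g
  proof
    fix x assume x: "x \<in> P"
    have Pc: "P \<subseteq> carrier G" using sylow_subset_carrier[OF P(1)] .
    obtain h where h: "h \<in> ?H" "Q \<subseteq> conj_set G h P"
      using p_subgroup_le_conj_sylow[OF H P Q(1) _ Q(2)] T TH by blast
    have hc: "h \<in> carrier G" using h H subgroup.subset by blast
    have "conj_set G (inv h) Q \<subseteq> P"
      using conj_set_mono[OF h(2), of "inv h"] conj_set_inv_conj_set[OF hc Pc] by simp
    moreover have "conj_set G (inv h) Q = Q"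
      using conj_set_centralizer_set[OF h(1) Qc] conj_set_inv_conj_set[OF hc Qc] by simp
    moreover have "g \<in> normalizer G P"
      using g H subgroup.subset normalizer_eq_conj_set[OF Pc] by blast
    ultimately show "g \<otimes> x = x \<otimes> g"
      using centralizer_normalizing_commute[OF P(1) Q] g(1) x by simp
  qed
  then show ?thesis unfolding burnside_subgroup_def using H T TH by blast
qed

section \<open>Counting elements by the order of their \<open>p\<close>-part\<close>

lemma Omega_generate_eq_Omega:
  assumes T: "sylow T" and y: "y \<in> T" "y [^] (p ^ (k - 1)) \<noteq> \<one>" and j: "j \<le> k"
  shows "Omega j (generate G {y}) = Omega j T"
proof -
  have yc: "y \<in> carrier G" using y sylow_subset_carrier[OF T] by auto
  have sT: "subgroup T G" using T unfolding sylow_def by auto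
  have "ord y dvd p ^ r" using pow_eq_id[OF yc] sylow_pow_exponent[OF T y(1)] by simp
  then obtain a where a: "ord y = p ^ a" using divides_primepow_nat[OF prime] by blast
  have "\<not> a \<le> k - 1"
  proof
    assume "a \<le> k - 1"
    then have "ord y dvd p ^ (k - 1)" using a by (simp add: le_imp_power_dvd)
    then show False using y(2) pow_eq_id[OF yc] by simp
  qed
  then have "j \<le> a" using j by simp
  have "card (generate G {y}) = p ^ a" using generate_pow_card[OF yc] a by simp
  moreover have "generate G {y} \<subseteq> T" using generate_subgroup_incl[OF _ sT] y by simp
  ultimately have "generate G {y} = Omega a T"
    using subgroup_of_sylow_eq_Omega(1)[OF T generate_is_subgroup] yc by simp
  then show ?thesis using Omega_mono[OF T \<open>j \<le> a\<close>] by (auto simp: Omega_def)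
qed

text \<open>The \<open>p\<close>-part of \<open>x\<close> lies in a Sylow subgroup \<open>T\<close> of \<open>Z\<^sub>G(Q')\<close>; this \<open>T\<close> contains
  \<open>Q'\<close>, and in the cyclic group \<open>T\<close> both \<open>Q'\<close> and \<open>Omega j\<close> of the group generated by the
  \<open>p\<close>-part of \<open>x\<close> are the subgroup of order \<open>p ^ j\<close>.\<close>

lemma conjugate_centralized_eq:
  assumes Q: "subgroup Q G" "card Q = p ^ j" and j: "j \<le> k"
    and x: "x \<in> carrier G" "p_part x [^] (p ^ (k - 1)) \<noteq> \<one>"
    and Q': "Q' \<in> conjugates G Q" "x \<in> centralizer_set G Q'"
  shows "Q' = Omega j (generate G {p_part x})"
proof -
  obtain g where g: "g \<in> carrier G" "Q' = conj_set G g Q" using Q'(1) unfolding conjugates_def by auto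
  have Qc: "Q \<subseteq> carrier G" using Q(1) subgroup.subset by blast
  have sQ': "subgroup Q' G" using subgroup_conj_set[OF Q(1) g(1)] g by simp
  have cQ': "card Q' = p ^ j" using card_conj_set[OF g(1) Qc] g Q by simp
  have Q'c: "Q' \<subseteq> carrier G" using sQ' subgroup.subset by blast
  let ?H = "centralizer_set G Q'"
  have H: "subgroup ?H G" using subgroup_centralizer_set[OF Q'c] .
  obtain T where T: "sylow T" "Q' \<subseteq> T" using p_subgroup_le_sylow[OF sQ' cQ'] by blast
  have TH: "T \<subseteq> ?H"
    unfolding centralizer_set_def using T sylow_subset_carrier[OF T(1)] sylow_commute[OF T(1)] by blast
  obtain h where h: "h \<in> ?H" "p_part x \<in> conj_set G h T"
    using p_element_in_conj_sylow[OF H T(1) TH subgroup_p_part[OF H Q'(2)] p_part_pow_exponent[OF x(1)]]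
    by blast
  have hc: "h \<in> carrier G" using h unfolding centralizer_set_def by auto
  have T': "sylow (conj_set G h T)" using sylow_conj_set[OF T(1) hc] .
  have "Q' \<subseteq> conj_set G h T"
    using conj_set_mono[OF T(2), of h] conj_set_centralizer_set[OF h(1) Q'c] by simp
  then have "Q' = Omega j (conj_set G h T)" using subgroup_of_sylow_eq_Omega(1)[OF T' sQ' _ cQ'] by simp
  also have "\<dots> = Omega j (generate G {p_part x})" using Omega_generate_eq_Omega[OF T' h(2) x(2) j] by simp
  finally show ?thesis .
qed

lemma conjugate_centralized_exists:
  assumes Q: "subgroup Q G" "card Q = p ^ j" and j: "j \<le> k"
    and x: "x \<in> carrier G" "p_part x [^] (p ^ (k - 1)) \<noteq> \<one>"
  shows "Omega j (generate G {p_part x}) \<in> conjugates G Q"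
    and "x \<in> centralizer_set G (Omega j (generate G {p_part x}))"
proof -
  let ?y = "p_part x"
  have Qc: "Q \<subseteq> carrier G" using Q(1) subgroup.subset by blast
  have yc: "?y \<in> carrier G" using x by simp
  obtain S where S: "sylow S" using sylow_exists by blast
  obtain h where h: "h \<in> carrier G" "?y \<in> conj_set G h S"
    using p_element_in_conj_sylow[OF subgroup_self S sylow_subset_carrier[OF S] yc p_part_pow_exponent[OF x(1)]]
    by blast
  define T where "T = conj_set G h S"
  have T: "sylow T" unfolding T_def using sylow_conj_set[OF S h(1)] .
  obtain c where c: "c \<in> carrier G" "Q \<subseteq> conj_set G c T"
    using p_subgroup_le_conj_sylow[OF subgroup_self T sylow_subset_carrier[OF T] Q(1) Qc Q(2)] by blast
  have "Q = Omega j (conj_set G c T)"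
    using subgroup_of_sylow_eq_Omega(1)[OF sylow_conj_set[OF T c(1)] Q(1) c(2) Q(2)] .
  then have "conj_set G (inv c) Q = Omega j T"
    using conj_set_Omega[OF sylow_conj_set[OF T c(1)] inv_closed[OF c(1)]]
      conj_set_inv_conj_set[OF c(1) sylow_subset_carrier[OF T]] by simp
  also have "\<dots> = Omega j (generate G {?y})"
    using Omega_generate_eq_Omega[OF T _ x(2) j] h(2) unfolding T_def by simp
  finally show "Omega j (generate G {?y}) \<in> conjugates G Q"
    unfolding conjugates_def using c(1) by force
  show "x \<in> centralizer_set G (Omega j (generate G {?y}))"
    unfolding centralizer_set_def
  proof (intro CollectI conjI ballI)
    show "x \<in> carrier G" by fact
    fix z assume "z \<in> Omega j (generate G {?y})"
    then obtain i where i: "z = ?y [^] (i::nat)"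
      using generate_pow_on_finite_carrier[OF fin yc] unfolding Omega_def by auto
    have "?y \<otimes> x = x \<otimes> ?y" using p_part_commute[OF x(1) x(1) refl] .
    then have "?y [^] i \<otimes> x = x \<otimes> ?y [^] i" using group_commutes_pow[OF _ yc x(1)] by blast
    then show "x \<otimes> z = z \<otimes> x" using i by simp
  qed
qed

lemma card_ord_dvd_eq_sum_conjugates:
  assumes Q: "subgroup Q G" "card Q = p ^ j" and j: "j \<le> k" and k: "k \<ge> 1"
  shows "card {x \<in> carrier G. p ^ k dvd ord x}
       = (\<Sum>Q'\<in>conjugates G Q. card {x\<in>centralizer_set G Q'. p_part x [^] (p ^ (k - 1)) \<noteq> \<one>})"
proof -
  let ?X = "{x \<in> carrier G. p ^ k dvd ord x}"
  have "(\<Sum>Q'\<in>conjugates G Q. card {x\<in>centralizer_set G Q'. p_part x [^] (p ^ (k - 1)) \<noteq> \<one>})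
      = (\<Sum>Q'\<in>conjugates G Q. card {x\<in>?X. x \<in> centralizer_set G Q'})"
  proof (rule sum.cong[OF refl], rule arg_cong[where f = card])
    fix Q' show "{x\<in>centralizer_set G Q'. p_part x [^] (p ^ (k - 1)) \<noteq> \<one>} = {x\<in>?X. x \<in> centralizer_set G Q'}"
      using prime_power_dvd_ord_iff[OF _ k] unfolding centralizer_set_def by blast
  qed
  also have "\<dots> = (\<Sum>x\<in>?X. card {Q'\<in>conjugates G Q. x \<in> centralizer_set G Q'})"
    using fin by (intro sum_card_Collect_swap) (simp_all add: conjugates_def)
  also have "\<dots> = (\<Sum>x\<in>?X. 1)"
  proof (rule sum.cong[OF refl])
    fix x assume "x \<in> ?X"
    then have x: "x \<in> carrier G" "p_part x [^] (p ^ (k - 1)) \<noteq> \<one>"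
      using prime_power_dvd_ord_iff[OF _ k] by auto
    have "{Q'\<in>conjugates G Q. x \<in> centralizer_set G Q'} = {Omega j (generate G {p_part x})}"
    proof (intro equalityI subsetI)
      fix Q' assume "Q' \<in> {Q'\<in>conjugates G Q. x \<in> centralizer_set G Q'}"
      then show "Q' \<in> {Omega j (generate G {p_part x})}" using conjugate_centralized_eq[OF Q j x] by simp
    qed (use conjugate_centralized_exists[OF Q j x] in simp)
    then show "card {Q'\<in>conjugates G Q. x \<in> centralizer_set G Q'} = 1" by simp
  qed
  finally show ?thesis by simp
qed

lemma card_ord_dvd_mult_normalizer:
  assumes Q: "subgroup Q G" "card Q = p ^ j" and jk: "1 \<le> j" "j \<le> k" "k \<le> r"
  shows "card {x \<in> carrier G. p ^ k dvd ord x} * p ^ r * card (normalizer G Q)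
       = order G * card (centralizer_set G Q) * (p ^ r - p ^ (k - 1))"
proof -
  have Qc: "Q \<subseteq> carrier G" using Q(1) subgroup.subset by blast
  have "card {x \<in> carrier G. p ^ k dvd ord x} * p ^ r
      = (\<Sum>Q'\<in>conjugates G Q. card {x\<in>centralizer_set G Q'. p_part x [^] (p ^ (k - 1)) \<noteq> \<one>} * p ^ r)"
    using card_ord_dvd_eq_sum_conjugates[OF Q jk(2)] jk by (simp add: sum_distrib_right)
  also have "\<dots> = (\<Sum>Q'\<in>conjugates G Q. card (centralizer_set G Q) * (p ^ r - p ^ (k - 1)))"
  proof (rule sum.cong[OF refl])
    fix Q' assume "Q' \<in> conjugates G Q"
    then obtain g where g: "g \<in> carrier G" "Q' = conj_set G g Q" unfolding conjugates_def by auto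
    have card_Q': "card Q' = p ^ j" using card_conj_set[OF g(1) Qc] g(2) Q(2) by simp
    moreover have "p ^ j \<noteq> 1" using one_less_power[OF p_gt_1, of j] jk(1) by linarith
    ultimately have "card Q' \<noteq> 1" by simp
    then have "Q' \<noteq> {\<one>}" by auto
    then have "burnside_subgroup (centralizer_set G Q')"
      using burnside_subgroup_centralizer_set[OF _ card_Q'] subgroup_conj_set[OF Q(1) g(1)] g(2) by simp
    then show "card {x\<in>centralizer_set G Q'. p_part x [^] (p ^ (k - 1)) \<noteq> \<one>} * p ^ r
        = card (centralizer_set G Q) * (p ^ r - p ^ (k - 1))"
      using card_large_p_part_burnside[of _ k] card_centralizer_set_conj_set[OF g(1) Qc] g(2) jk by simp
  qed
  finally have "card {x \<in> carrier G. p ^ k dvd ord x} * p ^ r * card (normalizer G Q)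
      = (card (conjugates G Q) * card (normalizer G Q)) * (card (centralizer_set G Q) * (p ^ r - p ^ (k - 1)))"
    by (simp add: mult_ac)
  then show ?thesis unfolding card_conjugates_mult_card_normalizer[OF Qc] by (simp only: mult.assoc)
qed

text \<open>Taking \<open>k = r\<close>, which is admissible for every nontrivial \<open>p\<close>-subgroup, shows that the
  ratio \<open>card Z\<^sub>G(Q) / card N\<^sub>G(Q)\<close> does not depend on \<open>Q\<close>.\<close>

lemma centralizer_normalizer_ratio:
  assumes Q: "subgroup Q G" "card Q = p ^ i" "Q \<noteq> {\<one>}"
    and Q': "subgroup Q' G" "card Q' = p ^ j" "Q' \<noteq> {\<one>}"
  shows "card (centralizer_set G Q) * card (normalizer G Q') = card (centralizer_set G Q') * card (normalizer G Q)"
proof -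
  let ?X = "card {x \<in> carrier G. p ^ r dvd ord x}" and ?D = "p ^ r - p ^ (r - 1)"
  have X_Q: "?X * p ^ r * card (normalizer G Q) = order G * card (centralizer_set G Q) * ?D"
    using card_ord_dvd_mult_normalizer[OF Q(1,2)] nontrivial_p_subgroup_exponent[OF Q]
      p_subgroup_exponent_le[OF Q(1,2)] by simp
  have X_Q': "?X * p ^ r * card (normalizer G Q') = order G * card (centralizer_set G Q') * ?D"
    using card_ord_dvd_mult_normalizer[OF Q'(1,2)] nontrivial_p_subgroup_exponent[OF Q']
      p_subgroup_exponent_le[OF Q'(1,2)] by simp
  have "r \<ge> 1" using nontrivial_p_subgroup_exponent[OF Q] p_subgroup_exponent_le[OF Q(1,2)] by simp
  then have "p ^ (r - 1) < p ^ r" using p_gt_1 by (simp add: power_strict_increasing)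
  moreover have "order G > 0" using fin by (simp add: order_gt_0_iff_finite)
  moreover have "order G * ?D * (card (centralizer_set G Q) * card (normalizer G Q'))
      = order G * ?D * (card (centralizer_set G Q') * card (normalizer G Q))"
  proof -
    have "order G * ?D * (card (centralizer_set G Q) * card (normalizer G Q'))
        = ?X * p ^ r * card (normalizer G Q) * card (normalizer G Q')"
      using X_Q by (simp add: mult_ac)
    also have "\<dots> = order G * ?D * (card (centralizer_set G Q') * card (normalizer G Q))"
      using X_Q' by (simp add: mult_ac)
    finally show ?thesis .
  qed
  ultimately show ?thesis by simp
qed

lemma card_ord_dvd_formula:
  assumes k: "1 \<le> k" "k \<le> r" and Q: "subgroup Q G" "card Q = p ^ n" "Q \<noteq> {\<one>}"
  shows "real (card {x \<in> carrier G. p ^ k dvd ord x}) =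
    (real p ^ (r - k + 1) - 1) / real p ^ (r - k + 1) *
    (real (order G) * real (card (centralizer_set G Q)) / real (card (normalizer G Q)))"
proof -
  obtain T where T: "sylow T" using sylow_exists by blast
  define W where "W = Omega 1 T"
  have W: "subgroup W G" "card W = p ^ 1" "W \<noteq> {\<one>}"
    using subgroup_Omega[OF T] card_Omega[OF T, of 1] k p_gt_1 unfolding W_def by auto
  have Wc: "W \<subseteq> carrier G" and Qc: "Q \<subseteq> carrier G" using W(1) Q(1) subgroup.subset by auto
  have N_pos: "card (normalizer G A) > 0" if "A \<subseteq> carrier G" for A
    using normalizer_imp_subgroup[OF that] subgroup.finite_imp_card_positive fin by blast
  define q where "q = real p ^ (r - k + 1)"
  have "r = (r - k + 1) + (k - 1)" using k by simp
  then have "real p ^ r = q * real p ^ (k - 1)" unfolding q_def by (metis power_add)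
  moreover have "real (p ^ r - p ^ (k - 1)) = real p ^ r - real p ^ (k - 1)"
    using k p_gt_1 by (simp add: of_nat_diff power_increasing)
  ultimately have "real (p ^ r - p ^ (k - 1)) = (q - 1) * real p ^ (k - 1)"
    by (simp add: algebra_simps)
  moreover have "real p ^ (k - 1) > 0" using p_gt_1 by simp
  ultimately have ratio: "real (p ^ r - p ^ (k - 1)) / real (p ^ r) = (q - 1) / q"
    using \<open>real p ^ r = q * real p ^ (k - 1)\<close> p_gt_1 by simp
  let ?X = "real (card {x \<in> carrier G. p ^ k dvd ord x})"
  have "?X * real (p ^ r) * real (card (normalizer G W))
      = real (order G) * real (card (centralizer_set G W)) * real (p ^ r - p ^ (k - 1))"
    using arg_cong[OF card_ord_dvd_mult_normalizer[OF W(1,2) le_refl k], of real] by simp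
  then have "?X = real (p ^ r - p ^ (k - 1)) / real (p ^ r) *
      (real (order G) * (real (card (centralizer_set G W)) / real (card (normalizer G W))))"
    using N_pos[OF Wc] p_gt_1 by (simp add: field_simps)
  also have "real (card (centralizer_set G W)) / real (card (normalizer G W))
      = real (card (centralizer_set G Q)) / real (card (normalizer G Q))"
    using arg_cong[OF centralizer_normalizer_ratio[OF W Q], of real] N_pos[OF Wc] N_pos[OF Qc]
    by (simp add: field_simps)
  finally have "?X = (q - 1) / q *
      (real (order G) * (real (card (centralizer_set G Q)) / real (card (normalizer G Q))))"
    by (simp only: ratio)
  then show ?thesis unfolding q_def by (simp only: times_divide_eq_right)
qed

lemma card_ord_dvd_above: "k > r \<Longrightarrow> {x \<in> carrier G. p ^ k dvd ord x} = {}"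
  using ord_dvd_group_order order_eq dvd_trans prime_power_dvd_coprime_mult_imp_le[OF prime coprime_index]
  by (metis (no_types, lifting) empty_Collect_eq not_le)

end

lemma cyclic_sylowI:
  assumes G: "group G" and fin: "finite (carrier G)" and p: "Factorial_Ring.prime p"
    and sylow: "\<forall>P. sylow_subgroup G p P \<longrightarrow> cyclic_group (G\<lparr>carrier := P\<rparr>) \<and> card P = p ^ r"
  shows "cyclic_sylow G p r (order G div p ^ r)"
proof -
  interpret group G by fact
  define a where "a = multiplicity p (order G)"
  have "order G \<noteq> 0" using fin by (simp add: order_gt_0_iff_finite)
  then have "\<not> p dvd order G div p ^ a" and order_a: "order G = p ^ a * (order G div p ^ a)"
    unfolding a_def using multiplicity_decompose[of "order G" p] p not_prime_unit
    by (auto simp: multiplicity_dvd)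
  obtain P where "subgroup P G" "card P = p ^ a" using sylow_thm[OF p G order_a fin] by blast
  then have "card P = p ^ r" using sylow unfolding sylow_subgroup_def a_def by blast
  then have "a = r" using \<open>card P = p ^ a\<close> prime_gt_1_nat[OF p] by (simp add: power_inject_exp)
  show ?thesis
  proof
    show "order G = p ^ r * (order G div p ^ r)" "\<not> p dvd order G div p ^ r"
      using order_a \<open>\<not> p dvd order G div p ^ a\<close> \<open>a = r\<close> by simp_all
    show "cyclic_group (G\<lparr>carrier := Q\<rparr>)" if "subgroup Q G" "card Q = p ^ r" for Q
      using that sylow \<open>a = r\<close> unfolding sylow_subgroup_def a_def by blast
  qed (use fin p in simp_all)
qed

theorem proposition5p10:
  fixes G :: "('a, 'b) monoid_scheme" and p r :: nat
  assumes "group G" and "finite (carrier G)" and "Factorial_Ring.prime p" and "r \<ge> 1"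
    and "\<forall>P. sylow_subgroup G p P \<longrightarrow>
           cyclic_group (G\<lparr>carrier := P\<rparr>) \<and> card P = p ^ r"
  shows "(\<forall>k Q. 1 \<le> k \<and> k \<le> r \<and> p_subgroup G p Q \<and> Q \<noteq> {\<one>\<^bsub>G\<^esub>} \<longrightarrow>
            real (elems_order_div G p k) =
              (real p ^ (r - k + 1) - 1) / real p ^ (r - k + 1) *
              (real (order G) * real (card (centralizer_set G Q)) / real (card (normalizer G Q))))
       \<and> elems_order_div G p 0 = order G
       \<and> (\<forall>k. k > r \<longrightarrow> elems_order_div G p k = 0)"
proof -
  interpret cyclic_sylow G p r "order G div p ^ r"
    using cyclic_sylowI assms by blast
  have "elems_order_div G p 0 = order G"
    unfolding elems_order_div_def order_def by simp
  moreover have "elems_order_div G p k = 0" if "k > r" for k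
    unfolding elems_order_div_def by (simp only: card_ord_dvd_above[OF that] card.empty)
  ultimately show ?thesis
    unfolding elems_order_div_def p_subgroup_def using card_ord_dvd_formula by blast
qed

end
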